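(* Let $\Delta=(\mathcal{S},I)$ be a CPS theory, $\Sigma$ a set of concerns, and $n\ge0$. Then a sequence of actions $[a_0,\dots,a_{n-1}]$ is a mitigation strategy for $\Sigma$ from $I$ if and only if the program $\Pi(\Delta)\cup\Pi^n_{plan}[\Sigma]$ has an answer set $S$ such that $occurs(a_i,i)\in S$ for every $i=0,\dots,n-1$.
   Context: CPS system $\mathcal{S}=(CO,A,F,R,\Gamma)$: components $CO$, a deterministic action theory $(A,F)$ in action language $\mathcal{B}$ (executability conditions, dynamic laws "$a$ causes $f$ if $p_1..p_n$", static laws "$f$ if $p_1..p_n$"), with transition function $\Phi$ and its extension $\hat\Phi$ to action sequences ($\hat\Phi(\alpha,s)=\emptyset$ if $\alpha$ is not executable from $s$); $R$ maps components to properties; $\Gamma$ a set of triples $(c,fu,\psi)$ with $\psi$ a formula over properties. Concerns carry an acyclic sub-concern relation and relation $addBy(c,p)$; $\Lambda(c)$ is the conjunction of all $\psi$ with $(c,fu,\psi)\in\Gamma$ and of all properties $p$ with $addBy(c,p)$ not occurring in any such $\psi$; $s\models c$ iff $s\models\Lambda(c)$ and all sub-concerns of $c$ are satisfied in $s$. A CPS theory is $(\mathcal{S},I)$ with $I$ a state. A mitigation strategy for $\Sigma$ from $I$ is a sequence $\alpha$ of actions with $\hat\Phi(\alpha,I)\ne\emptyset$ such that every $c\in\Sigma$ is satisfied in the resulting state. $\Pi(\Delta)=\Pi(\mathcal{S})^n\cup\Pi(I)\cup\Pi_{sat}$, where: $\Pi(\mathcal{S})^n$ contains $step(t)$ ($0\le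 t\le n$), $action(a)$, $fluent(f)$, $concern(c)$, $prop(p)$, $subCo$, $addBy$ facts; rules $exec(a,T)\leftarrow step(T),h^*(p_1,T),..$ for executability conditions; $h^*(f,T{+}1)\leftarrow step(T),occurs(a,T),h^*(p_1,T),..$ for dynamic laws; $h^*(f,T)\leftarrow step(T),h^*(p_1,T),..$ for static laws; inertia rules $h(f,T{+}1)\leftarrow step(T),h(f,T),not\ \neg h(f,T{+}1)$ and $\neg h(f,T{+}1)\leftarrow step(T),\neg h(f,T),not\ h(f,T{+}1)$ (here $h^*(f,T)=h(f,T)$, $h^*(\neg f,T)=\neg h(f,T)$); and each $\Lambda(c)$ encoded as an NNF formula tree with facts $formula(g)$, $conjunction(g)$/$disjunction(g)$, $member(m,g)$ (children: properties, negated properties, or sub-formula identifiers), root $g_c$ a conjunction with $addConcern(c,g_c)$. $\Pi(I)$ contains $h(f,0)$ for $f$ true in $I$ and $\neg h(f,0)$ for $f$ false in $I$. $\Pi_{sat}$ is: $formula(\neg G)\leftarrow formula(G)$; $prop(\neg G)\leftarrow prop(G)$; $h(\neg F,T)\leftarrow step(T),1\{formula(F);prop(F)\},\neg h(F,T)$; $h(F,T)\leftarrow step(T),formula(F),disjunction(F),member(G,F),h(G,T)$; $\neg h(F,T)\leftarrow step(T),formula(F),disjunction(F),not\ h(F,T)$; $\neg h(F,T)\leftarrow step(T),1\{formula(G);prop(G)\},formula(F),conjunction(F),member(G,F),not\ h(G,T)$; $h(F,T)\leftarrow step(T),formula(F),conjunction(F),not\ \neg h(F,T)$; $\neg h(sat(C),T)\leftarrow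 concern(C),addConcern(C,F),not\ h(F,T),step(T)$; $\neg h(sat(X),T)\leftarrow subCo(X,Y),not\ h(sat(Y),T),concern(X),concern(Y),step(T)$; $\neg h(sat(X),T)\leftarrow subCo(X,Y),\neg h(sat(Y),T),concern(X),concern(Y),step(T)$; $h(sat(C),T)\leftarrow not\ \neg h(sat(C),T),concern(C),step(T)$. $\Pi^n_{plan}[\Sigma]$ consists of the choice rule $1\{occurs(A,T):action(A)\}1\leftarrow step(T),T<n$ (exactly one action occurs at each step $T<n$), the constraint $\leftarrow occurs(A,T),not\ exec(A,T)$, and for each $c\in\Sigma$ the constraint $\leftarrow not\ h(sat(c),n)$. Answer sets are in the standard stable-model sense for programs with classical negation, choice rules and constraints. *)

theory Defs
  imports Main
begin

section \<open>Action language B (deterministic action theories)\<close>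

text \<open>A fluent literal is a pair (f, b): (f, True) stands for f and
  (f, False) for the negated fluent.  A state is represented by the set of fluents true in
  it (hence it is automatically complete and consistent); it must be closed under the
  static laws.\<close>

datatype 'p pform = PTrue | PFalse | PVar 'p | PNot "'p pform"
  | PAnd "'p pform" "'p pform" | POr "'p pform" "'p pform" | PImp "'p pform" "'p pform"

fun peval :: "'p set \<Rightarrow> 'p pform \<Rightarrow> bool" where
  "peval s PTrue = True"
| "peval s PFalse = False"
| "peval s (PVar p) = (p \<in> s)"
| "peval s (PNot x) = (\<not> peval s x)"
| "peval s (PAnd x y) = (peval s x \<and> peval s y)"
| "peval s (POr x y) = (peval s x \<or> peval s y)"
| "peval s (PImp x y) = (peval s x \<longrightarrow> peval s y)"

fun pvars :: "'p pform \<Rightarrow> 'p set" where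
  "pvars PTrue = {}"
| "pvars PFalse = {}"
| "pvars (PVar p) = {p}"
| "pvars (PNot x) = pvars x"
| "pvars (PAnd x y) = pvars x \<union> pvars y"
| "pvars (POr x y) = pvars x \<union> pvars y"
| "pvars (PImp x y) = pvars x \<union> pvars y"

text \<open>A CPS system (CO, A, F, R, Gamma) together with its concern structure
  (sub-concern relation and addBy).  A = UNIV :: 'a set, F = UNIV :: 'f set,
  the set of concerns is UNIV :: 'c set.\<close>

record ('co, 'a, 'f, 'c, 'u) cps =
  cps_comps :: "'co set"
  cps_exec :: "('a \<times> ('f \<times> bool) list) set"
    \<comment> \<open>executability conditions: executable a if p1..pn\<close>
  cps_dyn :: "('a \<times> ('f \<times> bool) \<times> ('f \<times> bool) list) set"
    \<comment> \<open>dynamic laws: a causes l if p1..pn\<close>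
  cps_stat :: "(('f \<times> bool) \<times> ('f \<times> bool) list) set"
    \<comment> \<open>static laws: l if p1..pn\<close>
  cps_R :: "'co \<Rightarrow> 'f set"
  cps_gamma :: "('c \<times> 'u \<times> 'f pform) set"
  cps_subco :: "('c \<times> 'c) set"
    \<comment> \<open>(x, y) : y is a sub-concern of x\<close>
  cps_addby :: "('c \<times> 'f) set"

definition cps_props :: "('co, 'a, 'f, 'c, 'u) cps \<Rightarrow> 'f set" where
  "cps_props S = (\<Union>co\<in>cps_comps S. cps_R S co)"

definition flits :: "'f set \<Rightarrow> ('f \<times> bool) set" where
  "flits s = {(f, b). (f \<in> s) = b}"

definition holds_all :: "'f set \<Rightarrow> ('f \<times> bool) list \<Rightarrow> bool" where
  "holds_all s ps \<longleftrightarrow> set ps \<subseteq> flits s"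

definition is_state :: "('co, 'a, 'f, 'c, 'u) cps \<Rightarrow> 'f set \<Rightarrow> bool" where
  "is_state S s \<longleftrightarrow> (\<forall>(l, ps) \<in> cps_stat S. holds_all s ps \<longrightarrow> l \<in> flits s)"

definition executable :: "('co, 'a, 'f, 'c, 'u) cps \<Rightarrow> 'a \<Rightarrow> 'f set \<Rightarrow> bool" where
  "executable S a s \<longleftrightarrow> (\<exists>ps. (a, ps) \<in> cps_exec S \<and> holds_all s ps)"

definition direct_eff :: "('co, 'a, 'f, 'c, 'u) cps \<Rightarrow> 'a \<Rightarrow> 'f set \<Rightarrow> ('f \<times> bool) set" where
  "direct_eff S a s = {l. \<exists>ps. (a, l, ps) \<in> cps_dyn S \<and> holds_all s ps}"

definition cn :: "('co, 'a, 'f, 'c, 'u) cps \<Rightarrow> ('f \<times> bool) set \<Rightarrow> ('f \<times> bool) set" where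
  "cn S X = \<Inter>{Y. X \<subseteq> Y \<and> (\<forall>(l, ps) \<in> cps_stat S. set ps \<subseteq> Y \<longrightarrow> l \<in> Y)}"

definition trans :: "('co, 'a, 'f, 'c, 'u) cps \<Rightarrow> 'a \<Rightarrow> 'f set \<Rightarrow> 'f set set" where
  "trans S a s = (if executable S a s
     then {s'. flits s' = cn S (direct_eff S a s \<union> (flits s \<inter> flits s'))} else {})"

fun trans_seq :: "('co, 'a, 'f, 'c, 'u) cps \<Rightarrow> 'a list \<Rightarrow> 'f set \<Rightarrow> 'f set set" where
  "trans_seq S [] s = {s}"
| "trans_seq S (a # as) s = (\<Union>s' \<in> trans S a s. trans_seq S as s')"

definition deterministic :: "('co, 'a, 'f, 'c, 'u) cps \<Rightarrow> bool" where
  "deterministic S \<longleftrightarrow> (\<forall>a s s1 s2. is_state S s \<longrightarrow> s1 \<in> trans S a s \<longrightarrow> s2 \<in> trans S a s \<longrightarrow> s1 = s2)"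

section \<open>Concerns and their satisfaction\<close>

definition lam_sat :: "('co, 'a, 'f, 'c, 'u) cps \<Rightarrow> 'f set \<Rightarrow> 'c \<Rightarrow> bool" where
  "lam_sat S s c \<longleftrightarrow>
     (\<forall>(c', u, \<psi>) \<in> cps_gamma S. c' = c \<longrightarrow> peval s \<psi>) \<and>
     (\<forall>p. (c, p) \<in> cps_addby S \<and> (\<forall>(c', u, \<psi>) \<in> cps_gamma S. c' = c \<longrightarrow> p \<notin> pvars \<psi>)
          \<longrightarrow> p \<in> s)"

inductive csat :: "('co, 'a, 'f, 'c, 'u) cps \<Rightarrow> 'f set \<Rightarrow> 'c \<Rightarrow> bool" for S s where
  "lam_sat S s c \<Longrightarrow> (\<forall>y. (c, y) \<in> cps_subco S \<longrightarrow> csat S s y) \<Longrightarrow> csat S s c"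

definition mitigation :: "('co, 'a, 'f, 'c, 'u) cps \<Rightarrow> 'c set \<Rightarrow> 'f set \<Rightarrow> 'a list \<Rightarrow> bool" where
  "mitigation S \<Sigma> I \<alpha> \<longleftrightarrow> trans_seq S \<alpha> I \<noteq> {} \<and> (\<forall>s \<in> trans_seq S \<alpha> I. \<forall>c \<in> \<Sigma>. csat S s c)"

section \<open>NNF formula-tree encodings of Lambda(c)\<close>

datatype ('f, 'g) tmember = MProp 'f | MNegProp 'f | MFrm 'g

record ('f, 'c, 'g) tree_enc =
  te_fids :: "'g set"
  te_conj :: "'g set"
  te_disj :: "'g set"
  te_mem :: "(('f, 'g) tmember \<times> 'g) set"
  te_root :: "'c \<Rightarrow> 'g"

inductive tree_holds :: "('f, 'c, 'g) tree_enc \<Rightarrow> 'f set \<Rightarrow> 'g \<Rightarrow> bool" for E s where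
  conj: "g \<in> te_conj E \<Longrightarrow>
     (\<forall>p. (MProp p, g) \<in> te_mem E \<longrightarrow> p \<in> s) \<Longrightarrow>
     (\<forall>p. (MNegProp p, g) \<in> te_mem E \<longrightarrow> p \<notin> s) \<Longrightarrow>
     (\<forall>g'. (MFrm g', g) \<in> te_mem E \<longrightarrow> tree_holds E s g') \<Longrightarrow> tree_holds E s g"
| disjP: "g \<in> te_disj E \<Longrightarrow> (MProp p, g) \<in> te_mem E \<Longrightarrow> p \<in> s \<Longrightarrow> tree_holds E s g"
| disjN: "g \<in> te_disj E \<Longrightarrow> (MNegProp p, g) \<in> te_mem E \<Longrightarrow> p \<notin> s \<Longrightarrow> tree_holds E s g"
| disjF: "g \<in> te_disj E \<Longrightarrow> (MFrm g', g) \<in> te_mem E \<Longrightarrow> tree_holds E s g' \<Longrightarrow> tree_holds E s g"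

definition enc_ok :: "('co, 'a, 'f, 'c, 'u) cps \<Rightarrow> ('f, 'c, 'g) tree_enc \<Rightarrow> bool" where
  "enc_ok S E \<longleftrightarrow>
     finite (te_fids E) \<and> finite (te_mem E) \<and>
     te_conj E \<union> te_disj E = te_fids E \<and> te_conj E \<inter> te_disj E = {} \<and>
     (\<forall>c. te_root E c \<in> te_conj E) \<and>
     (\<forall>(m, g) \<in> te_mem E. g \<in> te_fids E \<and>
        (case m of MProp p \<Rightarrow> p \<in> cps_props S | MNegProp p \<Rightarrow> p \<in> cps_props S
                 | MFrm g' \<Rightarrow> g' \<in> te_fids E)) \<and>
     wf {(g', g). (MFrm g', g) \<in> te_mem E} \<and>
     (\<forall>c s. tree_holds E s (te_root E c) \<longleftrightarrow> lam_sat S s c)"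

section \<open>Ground answer set programs\<close>

datatype ('a, 'f, 'c, 'g) trm = TA 'a | TF 'f | TC 'c | TG 'g | TN nat
  | TNeg "('a, 'f, 'c, 'g) trm" | TSat "('a, 'f, 'c, 'g) trm"

datatype ('a, 'f, 'c, 'g) atom =
    Step "('a, 'f, 'c, 'g) trm" | Action "('a, 'f, 'c, 'g) trm" | Fluent "('a, 'f, 'c, 'g) trm"
  | Concern "('a, 'f, 'c, 'g) trm" | Prop "('a, 'f, 'c, 'g) trm"
  | SubCo "('a, 'f, 'c, 'g) trm" "('a, 'f, 'c, 'g) trm"
  | AddBy "('a, 'f, 'c, 'g) trm" "('a, 'f, 'c, 'g) trm"
  | Formula "('a, 'f, 'c, 'g) trm" | Conjunction "('a, 'f, 'c, 'g) trm"
  | Disjunction "('a, 'f, 'c, 'g) trm"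
  | Member "('a, 'f, 'c, 'g) trm" "('a, 'f, 'c, 'g) trm"
  | AddConcern "('a, 'f, 'c, 'g) trm" "('a, 'f, 'c, 'g) trm"
  | Exec "('a, 'f, 'c, 'g) trm" "('a, 'f, 'c, 'g) trm"
  | Occurs "('a, 'f, 'c, 'g) trm" "('a, 'f, 'c, 'g) trm"
  | H "('a, 'f, 'c, 'g) trm" "('a, 'f, 'c, 'g) trm"

text \<open>Classical literals: (True, a) is the atom a, (False, a) is its classical negation.\<close>
type_synonym ('a, 'f, 'c, 'g) lit = "bool \<times> ('a, 'f, 'c, 'g) atom"

text \<open>Ground rules: normal rules  head <- pos, not neg  (head None = constraint) and
  choice rules  lo {C} hi <- pos, not neg.\<close>
datatype ('a, 'f, 'c, 'g) rule =
    NRule "('a, 'f, 'c, 'g) lit option" "('a, 'f, 'c, 'g) lit list" "('a, 'f, 'c, 'g) lit list"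
  | CRule nat nat "('a, 'f, 'c, 'g) lit set" "('a, 'f, 'c, 'g) lit list" "('a, 'f, 'c, 'g) lit list"

fun rule_sat :: "('a, 'f, 'c, 'g) lit set \<Rightarrow> ('a, 'f, 'c, 'g) rule \<Rightarrow> bool" where
  "rule_sat M (NRule h p n) = (set p \<subseteq> M \<and> set n \<inter> M = {} \<longrightarrow>
      (case h of None \<Rightarrow> False | Some l \<Rightarrow> l \<in> M))"
| "rule_sat M (CRule lo hi C p n) = (set p \<subseteq> M \<and> set n \<inter> M = {} \<longrightarrow>
      lo \<le> card (C \<inter> M) \<and> card (C \<inter> M) \<le> hi)"

text \<open>Gelfond-Lifschitz reduct (choice rules as in Simons-Niemela-Soininen); constraints are
  handled by the requirement that M satisfies every rule.\<close>
definition reduct :: "('a, 'f, 'c, 'g) rule set \<Rightarrow> ('a, 'f, 'c, 'g) lit set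
    \<Rightarrow> (('a, 'f, 'c, 'g) lit \<times> ('a, 'f, 'c, 'g) lit list) set" where
  "reduct P M =
     {(l, p) | l p n. NRule (Some l) p n \<in> P \<and> set n \<inter> M = {}} \<union>
     {(l, p) | l lo hi C p n. CRule lo hi C p n \<in> P \<and> set n \<inter> M = {} \<and> l \<in> C \<inter> M}"

definition least_model :: "(('a, 'f, 'c, 'g) lit \<times> ('a, 'f, 'c, 'g) lit list) set
    \<Rightarrow> ('a, 'f, 'c, 'g) lit set" where
  "least_model R = \<Inter>{M. \<forall>(l, b) \<in> R. set b \<subseteq> M \<longrightarrow> l \<in> M}"

definition consistent_lits :: "('a, 'f, 'c, 'g) lit set \<Rightarrow> bool" where
  "consistent_lits M \<longleftrightarrow> \<not> (\<exists>x. (True, x) \<in> M \<and> (False, x) \<in> M)"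

definition answer_set :: "('a, 'f, 'c, 'g) rule set \<Rightarrow> ('a, 'f, 'c, 'g) lit set \<Rightarrow> bool" where
  "answer_set P M \<longleftrightarrow> consistent_lits M \<and> M = least_model (reduct P M) \<and> (\<forall>r \<in> P. rule_sat M r)"

section \<open>The program Pi(Delta) \<union> Pi_plan^n[Sigma]\<close>

abbreviation fact :: "('a, 'f, 'c, 'g) lit \<Rightarrow> ('a, 'f, 'c, 'g) rule" where
  "fact l \<equiv> NRule (Some l) [] []"

definition hstar :: "'f \<times> bool \<Rightarrow> ('a, 'f, 'c, 'g) trm \<Rightarrow> ('a, 'f, 'c, 'g) lit" where
  "hstar fl T = (snd fl, H (TF (fst fl)) T)"

definition memb_trm :: "('f, 'g) tmember \<Rightarrow> ('a, 'f, 'c, 'g) trm" where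
  "memb_trm m = (case m of MProp p \<Rightarrow> TF p | MNegProp p \<Rightarrow> TNeg (TF p) | MFrm g \<Rightarrow> TG g)"

text \<open>Pi(S)^n (time variables range over ground terms; where T+1 occurs they range over
  numerals only).\<close>
definition pi_sys :: "('co, 'a, 'f, 'c, 'u) cps \<Rightarrow> ('f, 'c, 'g) tree_enc \<Rightarrow> nat
    \<Rightarrow> ('a, 'f, 'c, 'g) rule set" where
  "pi_sys S E n =
     {fact (True, Step (TN t)) | t. t \<le> n}
   \<union> {fact (True, Action (TA a)) | a. True}
   \<union> {fact (True, Fluent (TF f)) | f. True}
   \<union> {fact (True, Concern (TC c)) | c. True}
   \<union> {fact (True, Prop (TF p)) | p. p \<in> cps_props S}
   \<union> {fact (True, SubCo (TC x) (TC y)) | x y. (x, y) \<in> cps_subco S}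
   \<union> {fact (True, AddBy (TC c) (TF p)) | c p. (c, p) \<in> cps_addby S}
   \<union> {NRule (Some (True, Exec (TA a) T)) ((True, Step T) # map (\<lambda>q. hstar q T) ps) []
        | a ps T. (a, ps) \<in> cps_exec S}
   \<union> {NRule (Some (hstar l (TN (Suc t))))
        ((True, Step (TN t)) # (True, Occurs (TA a) (TN t)) # map (\<lambda>q. hstar q (TN t)) ps) []
        | a l ps t. (a, l, ps) \<in> cps_dyn S}
   \<union> {NRule (Some (hstar l T)) ((True, Step T) # map (\<lambda>q. hstar q T) ps) []
        | l ps T. (l, ps) \<in> cps_stat S}
   \<union> {NRule (Some (True, H (TF f) (TN (Suc t))))
        [(True, Step (TN t)), (True, H (TF f) (TN t))] [(False, H (TF f) (TN (Suc t)))] | f t. True}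
   \<union> {NRule (Some (False, H (TF f) (TN (Suc t))))
        [(True, Step (TN t)), (False, H (TF f) (TN t))] [(True, H (TF f) (TN (Suc t)))] | f t. True}
   \<union> {fact (True, Formula (TG g)) | g. g \<in> te_fids E}
   \<union> {fact (True, Conjunction (TG g)) | g. g \<in> te_conj E}
   \<union> {fact (True, Disjunction (TG g)) | g. g \<in> te_disj E}
   \<union> {fact (True, Member (memb_trm m) (TG g)) | m g. (m, g) \<in> te_mem E}
   \<union> {fact (True, AddConcern (TC c) (TG (te_root E c))) | c. True}"

definition pi_init :: "'f set \<Rightarrow> ('a, 'f, 'c, 'g) rule set" where
  "pi_init I = {fact (True, H (TF f) (TN 0)) | f. f \<in> I} \<union> {fact (False, H (TF f) (TN 0)) | f. f \<notin> I}"

definition pi_sat :: "('a, 'f, 'c, 'g) rule set" where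
  "pi_sat =
     {NRule (Some (True, Formula (TNeg G))) [(True, Formula G)] [] | G. True}
   \<union> {NRule (Some (True, Prop (TNeg G))) [(True, Prop G)] [] | G. True}
   \<union> {NRule (Some (True, H (TNeg F) T)) [(True, Step T), (True, Formula F), (False, H F T)] [] | F T. True}
   \<union> {NRule (Some (True, H (TNeg F) T)) [(True, Step T), (True, Prop F), (False, H F T)] [] | F T. True}
   \<union> {NRule (Some (True, H F T)) [(True, Step T), (True, Formula F), (True, Disjunction F),
        (True, Member G F), (True, H G T)] [] | F G T. True}
   \<union> {NRule (Some (False, H F T)) [(True, Step T), (True, Formula F), (True, Disjunction F)]
        [(True, H F T)] | F T. True}
   \<union> {NRule (Some (False, H F T)) [(True, Step T), (True, Formula G), (True, Formula F),
        (True, Conjunction F), (True, Member G F)] [(True, H G T)] | F G T. True}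
   \<union> {NRule (Some (False, H F T)) [(True, Step T), (True, Prop G), (True, Formula F),
        (True, Conjunction F), (True, Member G F)] [(True, H G T)] | F G T. True}
   \<union> {NRule (Some (True, H F T)) [(True, Step T), (True, Formula F), (True, Conjunction F)]
        [(False, H F T)] | F T. True}
   \<union> {NRule (Some (False, H (TSat C) T)) [(True, Concern C), (True, AddConcern C F), (True, Step T)]
        [(True, H F T)] | C F T. True}
   \<union> {NRule (Some (False, H (TSat X) T)) [(True, SubCo X Y), (True, Concern X), (True, Concern Y),
        (True, Step T)] [(True, H (TSat Y) T)] | X Y T. True}
   \<union> {NRule (Some (False, H (TSat X) T)) [(True, SubCo X Y), (False, H (TSat Y) T),
        (True, Concern X), (True, Concern Y), (True, Step T)] [] | X Y T. True}
   \<union> {NRule (Some (True, H (TSat C) T)) [(True, Concern C), (True, Step T)]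
        [(False, H (TSat C) T)] | C T. True}"

definition pi_delta :: "('co, 'a, 'f, 'c, 'u) cps \<Rightarrow> ('f, 'c, 'g) tree_enc \<Rightarrow> 'f set \<Rightarrow> nat
    \<Rightarrow> ('a, 'f, 'c, 'g) rule set" where
  "pi_delta S E I n = pi_sys S E n \<union> pi_init I \<union> pi_sat"

definition pi_plan :: "nat \<Rightarrow> 'c set \<Rightarrow> ('a, 'f, 'c, 'g) rule set" where
  "pi_plan n \<Sigma> =
     {CRule 1 1 {(True, Occurs (TA a) (TN t)) | a. True} [(True, Step (TN t))] [] | t. t < n}
   \<union> {NRule None [(True, Occurs A T)] [(True, Exec A T)] | A T. True}
   \<union> {NRule None [] [(True, H (TSat (TC c)) (TN n))] | c. c \<in> \<Sigma>}"

definition wf_cps :: "('co, 'a, 'f, 'c, 'u) cps \<Rightarrow> bool" where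
  "wf_cps S \<longleftrightarrow>
     finite (UNIV :: 'a set) \<and> finite (UNIV :: 'f set) \<and> finite (UNIV :: 'c set) \<and>
     finite (cps_comps S) \<and> finite (cps_exec S) \<and> finite (cps_dyn S) \<and> finite (cps_stat S) \<and>
     finite (cps_gamma S) \<and>
     deterministic S \<and>
     acyclic (cps_subco S) \<and>
     (\<forall>(c, u, \<psi>) \<in> cps_gamma S. pvars \<psi> \<subseteq> cps_props S) \<and>
     (\<forall>(c, p) \<in> cps_addby S. p \<in> cps_props S)"

end

theory Submission
  imports Defs
begin

text \<open>An answer set M of the program determines states s_t, t \<le> n, through its literals
  h(f, t): the inertia rules, started from Pi(I), decide every fluent at every step, and
  consistency makes the decision unique.  The choice rule admits exactly one occurs-atom per
  step, so the plan is read off M, and the constraint on exec makes each action executable.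
  The rules for dynamic and static laws close s_(t+1) under Cn(E(a_t, s_t) \<union> (s_t \<inter> s_(t+1)));
  conversely, induction on derivations in the reduct places every literal of s_(t+1) in this
  closure, so s_(t+1) = Phi(a_t, s_t).  Well-founded induction on the formula trees and on the
  acyclic sub-concern relation shows that M evaluates the formula and concern atoms correctly,
  so the goal constraints yield that every concern of Sigma holds in s_n.

  Conversely, the run s_0, ..., s_n of a mitigation strategy gives every atom its truth value
  along the run.  The resulting set is consistent and satisfies all rules, and each of its
  literals is derivable in its reduct: fluent literals by induction on time and, within one
  step, on the construction of Cn; formula literals by induction on the formula tree.  Hence it
  is an answer set, and it contains occurs(a_i, i).\<close>

section \<open>Answer sets and derivability\<close>

inductive derivable :: "(('a, 'f, 'c, 'g) lit \<times> ('a, 'f, 'c, 'g) lit list) set \<Rightarrow> ('a, 'f, 'c, 'g) lit \<Rightarrow> bool"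
  for R where
  "(l, b) \<in> R \<Longrightarrow> \<forall>x\<in>set b. derivable R x \<Longrightarrow> derivable R l"

lemma least_model_eq_derivable: "least_model R = {l. derivable R l}"
proof
  have "\<forall>(l, b)\<in>R. set b \<subseteq> {l. derivable R l} \<longrightarrow> l \<in> {l. derivable R l}"
    by (auto intro: derivable.intros)
  then show "least_model R \<subseteq> {l. derivable R l}"
    unfolding least_model_def by blast
  show "{l. derivable R l} \<subseteq> least_model R"
  proof (clarsimp simp: least_model_def)
    fix l M assume "derivable R l" and "\<forall>(l, b)\<in>R. set b \<subseteq> M \<longrightarrow> l \<in> M"
    then show "l \<in> M" by induction blast
  qed
qed

lemma answer_set_mem_iff_derivable:
  "answer_set P M \<Longrightarrow> l \<in> M \<longleftrightarrow> derivable (reduct P M) l"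
  unfolding answer_set_def least_model_eq_derivable by blast

lemma answer_set_supported:
  assumes "answer_set P M" and "l \<in> M"
  obtains b where "(l, b) \<in> reduct P M" and "set b \<subseteq> M"
proof -
  from assms have "derivable (reduct P M) l"
    by (simp add: answer_set_mem_iff_derivable)
  then obtain b where "(l, b) \<in> reduct P M" and "\<forall>x\<in>set b. derivable (reduct P M) x"
    by cases
  with assms(1) that show thesis
    using answer_set_mem_iff_derivable by blast
qed

lemma answer_set_induct[consumes 2, case_names rule]:
  assumes "answer_set P M" and "l \<in> M"
    and "\<And>l b. (l, b) \<in> reduct P M \<Longrightarrow> set b \<subseteq> M \<Longrightarrow> l \<in> M \<Longrightarrow> \<forall>x\<in>set b. Q x \<Longrightarrow> Q l"
  shows "Q l"
proof -
  have "derivable (reduct P M) l"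
    using assms(1,2) answer_set_mem_iff_derivable by blast
  then show ?thesis
  proof induction
    case (1 l b)
    then show ?case
      using assms(3)[of l b] answer_set_mem_iff_derivable[OF assms(1)] derivable.intros by blast
  qed
qed

lemma answer_set_rule_sat: "answer_set P M \<Longrightarrow> r \<in> P \<Longrightarrow> rule_sat M r"
  unfolding answer_set_def by blast

lemma answer_set_consistent: "answer_set P M \<Longrightarrow> (True, x) \<in> M \<Longrightarrow> (False, x) \<notin> M"
  unfolding answer_set_def consistent_lits_def by blast

lemma answer_setI:
  assumes "consistent_lits M" and "\<forall>r\<in>P. rule_sat M r" and "\<forall>l\<in>M. derivable (reduct P M) l"
  shows "answer_set P M"
proof -
  have "l \<in> M" if "derivable (reduct P M) l" for l
    using that
  proof induction
    case (1 l b)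
    then have "set b \<subseteq> M" by blast
    with 1(1) assms(2) show ?case
      unfolding reduct_def by fastforce
  qed
  then show ?thesis
    using assms unfolding answer_set_def least_model_eq_derivable by blast
qed

lemma derivable_NRule:
  assumes "NRule (Some l) b nn \<in> P" and "set nn \<inter> M = {}" and "\<forall>x\<in>set b. derivable (reduct P M) x"
  shows "derivable (reduct P M) l"
proof (rule derivable.intros[OF _ assms(3)])
  show "(l, b) \<in> reduct P M"
    using assms(1,2) unfolding reduct_def by blast
qed

lemma derivable_CRule:
  assumes "CRule lo hi C b nn \<in> P" and "set nn \<inter> M = {}" and "l \<in> C \<inter> M"
    and "\<forall>x\<in>set b. derivable (reduct P M) x"
  shows "derivable (reduct P M) l"
proof (rule derivable.intros[OF _ assms(4)])
  show "(l, b) \<in> reduct P M"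
    using assms(1-3) unfolding reduct_def by blast
qed

section \<open>Runs of an action theory\<close>

lemma flits_iff [simp]: "(f, b) \<in> flits s \<longleftrightarrow> (f \<in> s) = b"
  unfolding flits_def by simp

lemma cn_closed: "(l, ps) \<in> cps_stat S \<Longrightarrow> set ps \<subseteq> cn S X \<Longrightarrow> l \<in> cn S X"
  unfolding cn_def by blast

lemma cn_incl: "X \<subseteq> cn S X"
  unfolding cn_def by blast

lemma cn_least: "X \<subseteq> Y \<Longrightarrow> (\<forall>(l, ps) \<in> cps_stat S. set ps \<subseteq> Y \<longrightarrow> l \<in> Y) \<Longrightarrow> cn S X \<subseteq> Y"
  unfolding cn_def by blast

lemma trans_iff:
  "s' \<in> trans S a s \<longleftrightarrow>
     executable S a s \<and> flits s' = cn S (direct_eff S a s \<union> (flits s \<inter> flits s'))"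
  unfolding trans_def by simp

lemma trans_is_state:
  assumes "s' \<in> trans S a s"
  shows "is_state S s'"
  unfolding is_state_def holds_all_def
proof (intro ballI impI, clarify)
  obtain X where X: "flits s' = cn S X"
    using assms unfolding trans_iff by blast
  fix l ps assume "(l, ps) \<in> cps_stat S" and "set ps \<subseteq> flits s'"
  then show "l \<in> flits s'"
    unfolding X by (rule cn_closed)
qed

definition run :: "('co, 'a, 'f, 'c, 'u) cps \<Rightarrow> 'a list \<Rightarrow> (nat \<Rightarrow> 'f set) \<Rightarrow> bool" where
  "run S as st \<longleftrightarrow> (\<forall>i < length as. st (Suc i) \<in> trans S (as ! i) (st i))"

lemma run_Cons: "run S (a # as) st \<longleftrightarrow> st 1 \<in> trans S a (st 0) \<and> run S as (\<lambda>i. st (Suc i))"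
  unfolding run_def by (auto simp: less_Suc_eq_0_disj)

lemma trans_seq_run:
  assumes "deterministic S" and "is_state S (st 0)" and "run S as st"
  shows "trans_seq S as (st 0) = {st (length as)}"
  using assms(2,3)
proof (induction as arbitrary: st)
  case (Cons a as)
  then have step: "st 1 \<in> trans S a (st 0)" and "run S as (\<lambda>i. st (Suc i))"
    by (simp_all add: run_Cons)
  then have "trans_seq S as (st 1) = {st (Suc (length as))}"
    using Cons.IH[of "\<lambda>i. st (Suc i)"] trans_is_state[OF step] by simp
  moreover have "trans S a (st 0) = {st 1}"
    using step assms(1) Cons.prems(1) unfolding deterministic_def by blast
  ultimately show ?case by simp
qed simp

lemma run_if_trans_seq_nonempty:
  "trans_seq S as s \<noteq> {} \<Longrightarrow> \<exists>st. st 0 = s \<and> run S as st"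
proof (induction as arbitrary: s)
  case Nil
  show ?case by (intro exI[of _ "\<lambda>_. s"]) (simp add: run_def)
next
  case (Cons a as)
  then obtain s' where s': "s' \<in> trans S a s" and "trans_seq S as s' \<noteq> {}" by auto
  then obtain st where "st 0 = s'" and "run S as st"
    using Cons.IH by blast
  with s' have "run S (a # as) (case_nat s st)"
    by (simp add: run_Cons)
  then show ?case by (intro exI[of _ "case_nat s st"]) simp
qed

lemma mitigation_iff_run:
  assumes "deterministic S" and "is_state S I"
  shows "mitigation S \<Sigma> I \<alpha> \<longleftrightarrow>
    (\<exists>st. st 0 = I \<and> run S \<alpha> st \<and> (\<forall>c\<in>\<Sigma>. csat S (st (length \<alpha>)) c))"
proof
  assume mit: "mitigation S \<Sigma> I \<alpha>"
  then have "trans_seq S \<alpha> I \<noteq> {}"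
    unfolding mitigation_def by simp
  then obtain st where st: "st 0 = I" "run S \<alpha> st"
    using run_if_trans_seq_nonempty by blast
  then have "trans_seq S \<alpha> I = {st (length \<alpha>)}"
    using trans_seq_run[OF assms(1), of st] assms(2) by simp
  with mit have "\<forall>c\<in>\<Sigma>. csat S (st (length \<alpha>)) c"
    unfolding mitigation_def by simp
  with st show "\<exists>st. st 0 = I \<and> run S \<alpha> st \<and> (\<forall>c\<in>\<Sigma>. csat S (st (length \<alpha>)) c)"
    by blast
next
  assume "\<exists>st. st 0 = I \<and> run S \<alpha> st \<and> (\<forall>c\<in>\<Sigma>. csat S (st (length \<alpha>)) c)"
  then obtain st where st: "st 0 = I" "run S \<alpha> st" "\<forall>c\<in>\<Sigma>. csat S (st (length \<alpha>)) c" by blast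
  then have "trans_seq S \<alpha> I = {st (length \<alpha>)}"
    using trans_seq_run[OF assms(1), of st] assms(2) by simp
  with st show "mitigation S \<Sigma> I \<alpha>"
    unfolding mitigation_def by simp
qed

section \<open>Formula trees and concerns\<close>

definition member_holds :: "('f, 'c, 'g) tree_enc \<Rightarrow> 'f set \<Rightarrow> ('f, 'g) tmember \<Rightarrow> bool" where
  "member_holds E s m =
    (case m of MProp p \<Rightarrow> p \<in> s | MNegProp p \<Rightarrow> p \<notin> s | MFrm g \<Rightarrow> tree_holds E s g)"

lemma tree_holds_conj_iff:
  assumes "g \<in> te_conj E" and "te_conj E \<inter> te_disj E = {}"
  shows "tree_holds E s g \<longleftrightarrow> (\<forall>m. (m, g) \<in> te_mem E \<longrightarrow> member_holds E s m)"
proof -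
  have "tree_holds E s g \<longleftrightarrow>
    (\<forall>p. (MProp p, g) \<in> te_mem E \<longrightarrow> p \<in> s) \<and>
    (\<forall>p. (MNegProp p, g) \<in> te_mem E \<longrightarrow> p \<notin> s) \<and>
    (\<forall>g'. (MFrm g', g) \<in> te_mem E \<longrightarrow> tree_holds E s g')"
    using assms by (subst tree_holds.simps) blast
  also have "\<dots> \<longleftrightarrow> (\<forall>m. (m, g) \<in> te_mem E \<longrightarrow> member_holds E s m)"
    by (auto simp: member_holds_def split: tmember.splits)
  finally show ?thesis .
qed

lemma tree_holds_disj_iff:
  assumes "g \<in> te_disj E" and "te_conj E \<inter> te_disj E = {}"
  shows "tree_holds E s g \<longleftrightarrow> (\<exists>m. (m, g) \<in> te_mem E \<and> member_holds E s m)"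
proof -
  have "tree_holds E s g \<longleftrightarrow>
    (\<exists>p. (MProp p, g) \<in> te_mem E \<and> p \<in> s) \<or>
    (\<exists>p. (MNegProp p, g) \<in> te_mem E \<and> p \<notin> s) \<or>
    (\<exists>g'. (MFrm g', g) \<in> te_mem E \<and> tree_holds E s g')"
    using assms by (subst tree_holds.simps) blast
  also have "\<dots> \<longleftrightarrow> (\<exists>m. (m, g) \<in> te_mem E \<and> member_holds E s m)"
    unfolding member_holds_def
    by (intro iffI; elim disjE exE conjE)
      (force split: tmember.splits)+
  finally show ?thesis .
qed

lemma csat_lam_sat: "csat S s c \<Longrightarrow> lam_sat S s c"
  by (blast elim: csat.cases)

lemma csat_subconcern: "csat S s x \<Longrightarrow> (x, y) \<in> cps_subco S \<Longrightarrow> csat S s y"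
  by (blast elim: csat.cases)

section \<open>The planning program\<close>

text \<open>The terms G for which formula(G), resp. prop(G), is derivable: the identifiers of the
  encoding closed under the function symbol of negation.\<close>
fun formula_trm :: "('f, 'c, 'g) tree_enc \<Rightarrow> ('a, 'f, 'c, 'g) trm \<Rightarrow> bool" where
  "formula_trm E (TG g) \<longleftrightarrow> g \<in> te_fids E"
| "formula_trm E (TNeg G) \<longleftrightarrow> formula_trm E G"
| "formula_trm E _ \<longleftrightarrow> False"

fun prop_trm :: "('co, 'a, 'f, 'c, 'u) cps \<Rightarrow> ('a, 'f, 'c, 'g) trm \<Rightarrow> bool" where
  "prop_trm S (TF p) \<longleftrightarrow> p \<in> cps_props S"
| "prop_trm S (TNeg G) \<longleftrightarrow> prop_trm S G"
| "prop_trm S _ \<longleftrightarrow> False"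

lemma hstar_eq_iff [simp]: "hstar q T = hstar q' T' \<longleftrightarrow> q = q' \<and> T = T'"
  by (cases q; cases q') (auto simp: hstar_def)

lemma map_hstar_eq_iff [simp]: "map (\<lambda>q. hstar q T) ps = map (\<lambda>q. hstar q T) ps' \<longleftrightarrow> ps = ps'"
  by (simp add: inj_map_eq_map inj_def)

lemmas program_defs =
  reduct_def pi_delta_def pi_plan_def pi_sys_def pi_init_def pi_sat_def hstar_def

locale cps_program =
  fixes S :: "('co, 'a, 'f, 'c, 'u) cps" and E :: "('f, 'c, 'g) tree_enc"
    and I :: "'f set" and n :: nat and \<Sigma> :: "'c set"
  assumes wf: "wf_cps S" and enc: "enc_ok S E" and init_state: "is_state S I"
begin

abbreviation P :: "('a, 'f, 'c, 'g) rule set" where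
  "P \<equiv> pi_delta S E I n \<union> pi_plan n \<Sigma>"

lemma conj_disj_fids: "te_conj E \<union> te_disj E = te_fids E"
  using enc unfolding enc_ok_def by blast

lemma conj_disj_disjoint: "te_conj E \<inter> te_disj E = {}"
  using enc unfolding enc_ok_def by blast

lemma root_fid: "te_root E c \<in> te_fids E"
  using enc unfolding enc_ok_def by blast

lemma member_prop: "(MProp p, g) \<in> te_mem E \<Longrightarrow> p \<in> cps_props S"
  using enc unfolding enc_ok_def by fastforce

lemma member_negprop: "(MNegProp p, g) \<in> te_mem E \<Longrightarrow> p \<in> cps_props S"
  using enc unfolding enc_ok_def by fastforce

lemma member_formula: "(MFrm g', g) \<in> te_mem E \<Longrightarrow> g' \<in> te_fids E"
  using enc unfolding enc_ok_def by fastforce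

lemma subformula_wf: "wf {(g', g). (MFrm g', g) \<in> te_mem E}"
  using enc unfolding enc_ok_def by blast

lemma root_holds_iff: "tree_holds E s (te_root E c) \<longleftrightarrow> lam_sat S s c"
  using enc unfolding enc_ok_def by blast

lemma subco_converse_wf: "wf ((cps_subco S)\<inverse>)"
proof (rule finite_acyclic_wf_converse)
  have "finite (UNIV :: 'c set)"
    using wf unfolding wf_cps_def by blast
  then show "finite (cps_subco S)"
    by (metis finite_Prod_UNIV finite_subset subset_UNIV)
  show "acyclic (cps_subco S)"
    using wf unfolding wf_cps_def by blast
qed

lemma exec_rule_mem:
  "(a, ps) \<in> cps_exec S \<Longrightarrow>
    NRule (Some (True, Exec (TA a) T)) ((True, Step T) # map (\<lambda>q. hstar q T) ps) [] \<in> P"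
  by (simp add: pi_delta_def pi_sys_def)

lemma dyn_rule_mem:
  "(a, l, ps) \<in> cps_dyn S \<Longrightarrow>
    NRule (Some (hstar l (TN (Suc t))))
      ((True, Step (TN t)) # (True, Occurs (TA a) (TN t)) # map (\<lambda>q. hstar q (TN t)) ps) [] \<in> P"
  by (cases l) (simp add: pi_delta_def pi_sys_def)

lemma stat_rule_mem:
  "(l, ps) \<in> cps_stat S \<Longrightarrow>
    NRule (Some (hstar l T)) ((True, Step T) # map (\<lambda>q. hstar q T) ps) [] \<in> P"
  by (cases l) (simp add: pi_delta_def pi_sys_def)

lemma S_deterministic: "deterministic S"
  using wf unfolding wf_cps_def by blast

end

section \<open>From answer sets to mitigation strategies\<close>

locale plan_answer_set = cps_program S E I n \<Sigma>
  for S :: "('co, 'a, 'f, 'c, 'u) cps" and E :: "('f, 'c, 'g) tree_enc"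
    and I :: "'f set" and n :: nat and \<Sigma> :: "'c set" +
  fixes M :: "('a, 'f, 'c, 'g) lit set"
  assumes answer_set: "answer_set P M"
begin

lemma supported: "l \<in> M \<Longrightarrow> \<exists>b. (l, b) \<in> reduct P M \<and> set b \<subseteq> M"
  using answer_set_supported[OF answer_set] by metis

lemma fires: "NRule (Some l) b nn \<in> P \<Longrightarrow> set b \<subseteq> M \<Longrightarrow> set nn \<inter> M = {} \<Longrightarrow> l \<in> M"
  using answer_set_rule_sat[OF answer_set] by fastforce

lemma constraint_blocks: "NRule None b nn \<in> P \<Longrightarrow> set b \<subseteq> M \<Longrightarrow> set nn \<inter> M \<noteq> {}"
  using answer_set_rule_sat[OF answer_set] by fastforce

lemma head_absent_blocked:
  "NRule (Some l) b nn \<in> P \<Longrightarrow> set b \<subseteq> M \<Longrightarrow> l \<notin> M \<Longrightarrow> set nn \<inter> M \<noteq> {}"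
  using fires by blast

lemma fact_mem: "fact l \<in> P \<Longrightarrow> l \<in> M"
  using fires[of l "[]" "[]"] by simp

lemma consistent: "(True, x) \<in> M \<Longrightarrow> (False, x) \<notin> M"
  using answer_set_consistent[OF answer_set] .

lemma formula_memD: "(True, Formula T) \<in> M \<Longrightarrow> formula_trm E T"
proof (induction T)
  case (TNeg T)
  then show ?case using supported[OF TNeg.prems] by (simp add: program_defs) auto
qed (use supported[of "(True, Formula _)"] in \<open>(simp add: program_defs; auto)\<close>)+

lemma conjunction_memD: "(True, Conjunction T) \<in> M \<Longrightarrow> \<exists>g. T = TG g \<and> g \<in> te_conj E"
  using supported[of "(True, Conjunction T)"] by (simp add: program_defs) auto

lemma disjunction_memD: "(True, Disjunction T) \<in> M \<Longrightarrow> \<exists>g. T = TG g \<and> g \<in> te_disj E"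
  using supported[of "(True, Disjunction T)"] by (simp add: program_defs) auto

lemma member_memD:
  "(True, Member G F) \<in> M \<Longrightarrow> \<exists>m g. G = memb_trm m \<and> F = TG g \<and> (m, g) \<in> te_mem E"
  using supported[of "(True, Member G F)"] by (simp add: program_defs) auto

lemma occurs_memD: "(True, Occurs A T) \<in> M \<Longrightarrow> \<exists>a t. A = TA a \<and> T = TN t \<and> t < n"
  using supported[of "(True, Occurs A T)"] by (simp add: program_defs) auto

lemma exec_memD:
  "(True, Exec A T) \<in> M \<Longrightarrow>
    \<exists>a ps. A = TA a \<and> (a, ps) \<in> cps_exec S \<and> (\<forall>q\<in>set ps. hstar q T \<in> M)"
  using supported[of "(True, Exec A T)"] by (simp add: program_defs) (auto simp: image_subset_iff)

lemma step_mem: "t \<le> n \<Longrightarrow> (True, Step (TN t)) \<in> M"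
  by (rule fact_mem) (simp add: program_defs)

lemma concern_mem: "(True, Concern (TC c)) \<in> M"
  by (rule fact_mem) (simp add: program_defs)

lemma subco_mem: "(x, y) \<in> cps_subco S \<Longrightarrow> (True, SubCo (TC x) (TC y)) \<in> M"
  by (rule fact_mem) (simp add: program_defs)

lemma addconcern_mem: "(True, AddConcern (TC c) (TG (te_root E c))) \<in> M"
  by (rule fact_mem) (simp add: program_defs)

lemma formula_mem: "g \<in> te_fids E \<Longrightarrow> (True, Formula (TG g)) \<in> M"
  by (rule fact_mem) (simp add: program_defs)

lemma conjunction_mem: "g \<in> te_conj E \<Longrightarrow> (True, Conjunction (TG g)) \<in> M"
  by (rule fact_mem) (simp add: program_defs)

lemma member_mem: "(m, g) \<in> te_mem E \<Longrightarrow> (True, Member (memb_trm m) (TG g)) \<in> M"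
  by (rule fact_mem) (simp add: program_defs, blast)

lemma prop_mem: "p \<in> cps_props S \<Longrightarrow> (True, Prop (TF p)) \<in> M"
  by (rule fact_mem) (simp add: program_defs)

lemma neg_prop_mem: "p \<in> cps_props S \<Longrightarrow> (True, Prop (TNeg (TF p))) \<in> M"
proof (rule fires)
  show "NRule (Some (True, Prop (TNeg (TF p)))) [(True, Prop (TF p))] [] \<in> P"
    by (simp add: program_defs)
qed (simp_all add: prop_mem)

lemma init_mem: "(f \<in> I, H (TF f) (TN 0)) \<in> M"
  by (rule fact_mem) (cases "f \<in> I"; simp add: program_defs)

lemma fluent_literal_complete: "t \<le> n \<Longrightarrow> (True, H (TF f) (TN t)) \<in> M \<or> (False, H (TF f) (TN t)) \<in> M"
proof (induction t)
  case 0
  show ?case using init_mem[of f] by (cases "f \<in> I") auto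
next
  case (Suc t)
  have pos: "NRule (Some (True, H (TF f) (TN (Suc t))))
      [(True, Step (TN t)), (True, H (TF f) (TN t))] [(False, H (TF f) (TN (Suc t)))] \<in> P"
    and neg: "NRule (Some (False, H (TF f) (TN (Suc t))))
      [(True, Step (TN t)), (False, H (TF f) (TN t))] [(True, H (TF f) (TN (Suc t)))] \<in> P"
    by (simp_all add: program_defs)
  show ?case
    using Suc step_mem[of t] fires[OF pos] fires[OF neg] by auto
qed

definition state_at :: "nat \<Rightarrow> 'f set" where
  "state_at t = {f. (True, H (TF f) (TN t)) \<in> M}"

lemma fluent_mem_iff: "t \<le> n \<Longrightarrow> (b, H (TF f) (TN t)) \<in> M \<longleftrightarrow> (f \<in> state_at t) = b"
  using fluent_literal_complete[of t f] consistent[of "H (TF f) (TN t)"]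
  unfolding state_at_def by (cases b) auto

lemma hstar_mem_iff: "t \<le> n \<Longrightarrow> hstar q (TN t) \<in> M \<longleftrightarrow> q \<in> flits (state_at t)"
  using fluent_mem_iff[of t "snd q" "fst q"] by (cases q) (simp add: hstar_def)

lemma state_at_0: "state_at 0 = I"
proof -
  have "(True, H (TF f) (TN 0)) \<in> M \<longleftrightarrow> f \<in> I" for f
    using init_mem[of f] consistent[of "H (TF f) (TN 0)"] by (cases "f \<in> I") auto
  then show ?thesis
    unfolding state_at_def by blast
qed

lemma neg_prop_value_memD: "(True, H (TNeg (TF p)) (TN t)) \<in> M \<Longrightarrow> t \<le> n \<Longrightarrow> p \<notin> state_at t"
  using supported[of "(True, H (TNeg (TF p)) (TN t))"]
    formula_memD[of "TF p"] formula_memD[of "TNeg (TF p)"] fluent_mem_iff[of t False p]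
  by (simp add: program_defs) auto

lemma occurs_unique:
  assumes a: "(True, Occurs (TA a) (TN t)) \<in> M" and b: "(True, Occurs (TA b) (TN t)) \<in> M"
  shows "a = b"
proof -
  define C :: "('a, 'f, 'c, 'g) lit set" where "C = {(True, Occurs (TA a) (TN t)) | a. True}"
  have "t < n"
    using occurs_memD[OF a] by auto
  then have "CRule 1 1 C [(True, Step (TN t))] [] \<in> P"
    unfolding C_def pi_plan_def by blast
  then have "card (C \<inter> M) = 1"
    using answer_set_rule_sat[OF answer_set] step_mem[of t] \<open>t < n\<close> by fastforce
  then obtain x where x: "C \<inter> M = {x}"
    by (rule card_1_singletonE)
  have "(True, Occurs (TA a) (TN t)) = x" and "(True, Occurs (TA b) (TN t)) = x"
    using a b x unfolding C_def by blast+
  then show "a = b" by auto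
qed

lemma occurs_executable:
  assumes occ: "(True, Occurs (TA a) (TN t)) \<in> M"
  shows "executable S a (state_at t)"
proof -
  have "t < n"
    using occurs_memD[OF occ] by auto
  have "NRule None [(True, Occurs (TA a) (TN t))] [(True, Exec (TA a) (TN t))] \<in> P"
    by (simp add: program_defs)
  then have "(True, Exec (TA a) (TN t)) \<in> M"
    using constraint_blocks occ by fastforce
  then obtain ps where "(a, ps) \<in> cps_exec S" and "\<forall>q\<in>set ps. hstar q (TN t) \<in> M"
    using exec_memD by blast
  then show ?thesis
    unfolding executable_def holds_all_def using hstar_mem_iff \<open>t < n\<close> by auto
qed

lemma closure_subset_state_at:
  assumes occ: "(True, Occurs (TA a) (TN t)) \<in> M"
  shows "cn S (direct_eff S a (state_at t) \<union> (flits (state_at t) \<inter> flits (state_at (Suc t))))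
    \<subseteq> flits (state_at (Suc t))"
proof (rule cn_least)
  have t: "t < n"
    using occurs_memD[OF occ] by auto
  have "direct_eff S a (state_at t) \<subseteq> flits (state_at (Suc t))"
  proof
    fix l assume "l \<in> direct_eff S a (state_at t)"
    then obtain ps where ps: "(a, l, ps) \<in> cps_dyn S" "holds_all (state_at t) ps"
      unfolding direct_eff_def by blast
    have "NRule (Some (hstar l (TN (Suc t))))
        ((True, Step (TN t)) # (True, Occurs (TA a) (TN t)) # map (\<lambda>q. hstar q (TN t)) ps) [] \<in> P"
      using ps(1) by (rule dyn_rule_mem)
    then have "hstar l (TN (Suc t)) \<in> M"
      by (rule fires)
        (use ps(2) t occ step_mem[of t] hstar_mem_iff[of t] in \<open>auto simp: holds_all_def\<close>)
    then show "l \<in> flits (state_at (Suc t))"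
      using hstar_mem_iff[of "Suc t" l] t by simp
  qed
  then show "direct_eff S a (state_at t) \<union> (flits (state_at t) \<inter> flits (state_at (Suc t)))
    \<subseteq> flits (state_at (Suc t))"
    by blast
  show "\<forall>(l, ps)\<in>cps_stat S. set ps \<subseteq> flits (state_at (Suc t)) \<longrightarrow> l \<in> flits (state_at (Suc t))"
  proof (intro ballI impI, clarify)
    fix l ps assume ps: "(l, ps) \<in> cps_stat S" "set ps \<subseteq> flits (state_at (Suc t))"
    have "NRule (Some (hstar l (TN (Suc t))))
        ((True, Step (TN (Suc t))) # map (\<lambda>q. hstar q (TN (Suc t))) ps) [] \<in> P"
      using ps(1) by (rule stat_rule_mem)
    then have "hstar l (TN (Suc t)) \<in> M"
      by (rule fires) (use ps(2) t step_mem[of "Suc t"] hstar_mem_iff[of "Suc t"] in auto)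
    then show "l \<in> flits (state_at (Suc t))"
      using hstar_mem_iff[of "Suc t" l] t by simp
  qed
qed

text \<open>The last case comes from the generic formula rules of Pi_sat instantiated with F = f;
  it never applies, since formula(f) is not derivable.\<close>
lemma fluent_value_reduct_cases:
  assumes "((b, H (TF f) (TN k)), bd) \<in> reduct P M"
  shows "(\<exists>a ps t. k = Suc t \<and> (a, (f, b), ps) \<in> cps_dyn S \<and>
      bd = (True, Step (TN t)) # (True, Occurs (TA a) (TN t)) # map (\<lambda>q. hstar q (TN t)) ps)
    \<or> (\<exists>ps. ((f, b), ps) \<in> cps_stat S \<and> bd = (True, Step (TN k)) # map (\<lambda>q. hstar q (TN k)) ps)
    \<or> (\<exists>t. k = Suc t \<and> bd = [(True, Step (TN t)), (b, H (TF f) (TN t))])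
    \<or> (k = 0 \<and> bd = [])
    \<or> (True, Formula (TF f)) \<in> set bd"
  using assms by (simp add: program_defs) (elim disjE exE conjE; simp; blast)

lemma dyn_support_direct_effect:
  assumes occ: "(True, Occurs (TA a) (TN t)) \<in> M" and dyn: "(a', (f, b), ps) \<in> cps_dyn S"
    and body: "set ((True, Step (TN t)) # (True, Occurs (TA a') (TN t)) # map (\<lambda>q. hstar q (TN t)) ps)
      \<subseteq> M"
  shows "(f, b) \<in> direct_eff S a (state_at t)"
proof -
  have t: "t < n"
    using occurs_memD[OF occ] by auto
  have "(True, Occurs (TA a') (TN t)) \<in> M"
    using body by simp
  with occ have "a' = a"
    using occurs_unique by blast
  moreover have "holds_all (state_at t) ps"
    using body hstar_mem_iff[of t] t by (auto simp: holds_all_def)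
  ultimately show ?thesis
    using dyn unfolding direct_eff_def by blast
qed

lemma fluent_literal_in_closure:
  assumes occ: "(True, Occurs (TA a) (TN t)) \<in> M" and lit: "(b, H (TF f) (TN (Suc t))) \<in> M"
  shows "(f, b) \<in> cn S (direct_eff S a (state_at t) \<union> (flits (state_at t) \<inter> flits (state_at (Suc t))))"
    (is "_ \<in> cn S ?X")
proof -
  have t: "t < n"
    using occurs_memD[OF occ] by auto
  have "\<forall>f b. l = (b, H (TF f) (TN (Suc t))) \<longrightarrow> (f, b) \<in> cn S ?X" if "l \<in> M" for l
    using answer_set that
  proof (induction rule: answer_set_induct)
    case (rule l bd)
    show ?case
    proof (intro allI impI)
      fix f b assume l: "l = (b, H (TF f) (TN (Suc t)))"
      from fluent_value_reduct_cases[OF rule(1)[unfolded l]] show "(f, b) \<in> cn S ?X"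
      proof (elim disjE exE conjE)
        fix a' ps t' assume "Suc t = Suc t'" and "(a', (f, b), ps) \<in> cps_dyn S"
          and "bd = (True, Step (TN t')) # (True, Occurs (TA a') (TN t')) # map (\<lambda>q. hstar q (TN t')) ps"
        with rule(2) have "(f, b) \<in> direct_eff S a (state_at t)"
          using dyn_support_direct_effect[OF occ] by simp
        then show ?thesis
          by (rule subsetD[OF cn_incl, OF UnI1])
      next
        fix ps assume st: "((f, b), ps) \<in> cps_stat S"
          and bd: "bd = (True, Step (TN (Suc t))) # map (\<lambda>q. hstar q (TN (Suc t))) ps"
        have "set ps \<subseteq> cn S ?X"
        proof
          fix q assume "q \<in> set ps"
          then have "hstar q (TN (Suc t)) \<in> set bd"
            using bd by simp
          then show "q \<in> cn S ?X"
            using rule(4) by (cases q) (simp add: hstar_def)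
        qed
        with st show ?thesis
          by (rule cn_closed)
      next
        fix t' assume "Suc t = Suc t'" and "bd = [(True, Step (TN t')), (b, H (TF f) (TN t'))]"
        with rule(2) have "(f, b) \<in> flits (state_at t)"
          using fluent_mem_iff[of t b f] t by simp
        moreover have "(f, b) \<in> flits (state_at (Suc t))"
          using rule(3) l fluent_mem_iff[of "Suc t" b f] t by simp
        ultimately show ?thesis
          by (intro subsetD[OF cn_incl, OF UnI2] IntI)
      next
        assume "(True, Formula (TF f)) \<in> set bd"
        with rule(2) have "(True, Formula (TF f)) \<in> M"
          by blast
        from formula_memD[OF this] show ?thesis
          by simp
      qed simp
    qed
  qed
  with lit show ?thesis
    by blast
qed

lemma state_at_subset_closure:
  assumes occ: "(True, Occurs (TA a) (TN t)) \<in> M"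
  shows "flits (state_at (Suc t))
    \<subseteq> cn S (direct_eff S a (state_at t) \<union> (flits (state_at t) \<inter> flits (state_at (Suc t))))"
proof clarify
  fix f b assume "(f, b) \<in> flits (state_at (Suc t))"
  then have "(b, H (TF f) (TN (Suc t))) \<in> M"
    using fluent_mem_iff[of "Suc t" b f] occurs_memD[OF occ] by auto
  then show "(f, b) \<in> cn S (direct_eff S a (state_at t) \<union> (flits (state_at t) \<inter> flits (state_at (Suc t))))"
    by (rule fluent_literal_in_closure[OF occ])
qed

lemma state_at_Suc_trans:
  assumes occ: "(True, Occurs (TA a) (TN t)) \<in> M"
  shows "state_at (Suc t) \<in> trans S a (state_at t)"
proof -
  have "flits (state_at (Suc t))
      = cn S (direct_eff S a (state_at t) \<union> (flits (state_at t) \<inter> flits (state_at (Suc t))))"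
    using state_at_subset_closure[OF occ] closure_subset_state_at[OF occ] by (rule equalityI)
  then show ?thesis
    unfolding trans_iff using occurs_executable[OF occ] by simp
qed

lemma run_state_at:
  assumes "length \<alpha> = n" and "\<forall>i<n. (True, Occurs (TA (\<alpha> ! i)) (TN i)) \<in> M"
  shows "run S \<alpha> state_at"
  using assms(2) state_at_Suc_trans unfolding run_def assms(1) by blast

lemma formula_value_reduct_cases:
  assumes "((True, H (TG g) T), bd) \<in> reduct P M"
  shows "(\<exists>G. bd = [(True, Step T), (True, Formula (TG g)), (True, Disjunction (TG g)),
        (True, Member G (TG g)), (True, H G T)])
    \<or> (bd = [(True, Step T), (True, Formula (TG g)), (True, Conjunction (TG g))]
        \<and> (False, H (TG g) T) \<notin> M)"
  using assms by (simp add: program_defs) (elim disjE exE conjE; simp)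

lemma member_value_holds:
  assumes "t \<le> n" and "(True, H (memb_trm m) (TN t)) \<in> M"
    and "\<And>g'. m = MFrm g' \<Longrightarrow> tree_holds E (state_at t) g'"
  shows "member_holds E (state_at t) m"
  using assms fluent_mem_iff[of t True] neg_prop_value_memD
  by (cases m) (auto simp: member_holds_def memb_trm_def)

lemma conj_member_value_mem:
  assumes g: "(True, H (TG g) (TN t)) \<in> M" and t: "t \<le> n" and gc: "g \<in> te_conj E"
    and m: "(m, g) \<in> te_mem E"
  shows "(True, H (memb_trm m) (TN t)) \<in> M"
proof (rule ccontr)
  assume not: "(True, H (memb_trm m) (TN t)) \<notin> M"
  have base: "(True, Step (TN t)) \<in> M" "(True, Formula (TG g)) \<in> M"
    "(True, Conjunction (TG g)) \<in> M" "(True, Member (memb_trm m) (TG g)) \<in> M"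
    using step_mem[OF t] formula_mem conjunction_mem[OF gc] member_mem[OF m] gc conj_disj_fids
    by auto
  have "(False, H (TG g) (TN t)) \<in> M"
  proof (cases m)
    case (MProp p)
    have "NRule (Some (False, H (TG g) (TN t))) [(True, Step (TN t)), (True, Prop (TF p)),
        (True, Formula (TG g)), (True, Conjunction (TG g)), (True, Member (TF p) (TG g))]
        [(True, H (TF p) (TN t))] \<in> P"
      by (simp add: program_defs)
    then show ?thesis
      by (rule fires) (use base not MProp prop_mem member_prop m in \<open>auto simp: memb_trm_def\<close>)
  next
    case (MNegProp p)
    have "NRule (Some (False, H (TG g) (TN t))) [(True, Step (TN t)), (True, Prop (TNeg (TF p))),
        (True, Formula (TG g)), (True, Conjunction (TG g)), (True, Member (TNeg (TF p)) (TG g))]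
        [(True, H (TNeg (TF p)) (TN t))] \<in> P"
      by (simp add: program_defs)
    then show ?thesis
      by (rule fires) (use base not MNegProp neg_prop_mem member_negprop m in \<open>auto simp: memb_trm_def\<close>)
  next
    case (MFrm g')
    have "NRule (Some (False, H (TG g) (TN t))) [(True, Step (TN t)), (True, Formula (TG g')),
        (True, Formula (TG g)), (True, Conjunction (TG g)), (True, Member (TG g') (TG g))]
        [(True, H (TG g') (TN t))] \<in> P"
      by (simp add: program_defs)
    then show ?thesis
      by (rule fires) (use base not MFrm formula_mem member_formula m in \<open>auto simp: memb_trm_def\<close>)
  qed
  with g consistent show False by blast
qed

lemma formula_value_true_holds:
  assumes t: "t \<le> n"
  shows "(True, H (TG g) (TN t)) \<in> M \<Longrightarrow> tree_holds E (state_at t) g"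
proof (induction g rule: wf_induct[OF subformula_wf])
  case (1 g)
  have member_holds: "member_holds E (state_at t) m"
    if "(m, g) \<in> te_mem E" and "(True, H (memb_trm m) (TN t)) \<in> M" for m
    by (rule member_value_holds[OF t that(2)]) (use 1(1) that in \<open>auto simp: memb_trm_def\<close>)
  obtain bd where r: "((True, H (TG g) (TN t)), bd) \<in> reduct P M" and bd: "set bd \<subseteq> M"
    using supported[OF 1(2)] by blast
  from formula_value_reduct_cases[OF r] show ?case
  proof (elim disjE exE conjE)
    fix G assume "bd = [(True, Step (TN t)), (True, Formula (TG g)), (True, Disjunction (TG g)),
        (True, Member G (TG g)), (True, H G (TN t))]"
    with bd have d: "(True, Disjunction (TG g)) \<in> M" and mem: "(True, Member G (TG g)) \<in> M"
      and v: "(True, H G (TN t)) \<in> M"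
      by auto
    from disjunction_memD[OF d] have gd: "g \<in> te_disj E" by simp
    from member_memD[OF mem] obtain m where "G = memb_trm m" and m: "(m, g) \<in> te_mem E" by auto
    with v have "member_holds E (state_at t) m"
      using member_holds by blast
    with m show ?thesis
      using tree_holds_disj_iff[OF gd conj_disj_disjoint] by blast
  next
    assume "bd = [(True, Step (TN t)), (True, Formula (TG g)), (True, Conjunction (TG g))]"
    with bd have gc: "g \<in> te_conj E"
      using conjunction_memD by auto
    have "member_holds E (state_at t) m" if "(m, g) \<in> te_mem E" for m
      using member_holds[OF that conj_member_value_mem[OF 1(2) t gc that]] .
    then show ?thesis
      using tree_holds_conj_iff[OF gc conj_disj_disjoint] by blast
  qed
qed

lemma sat_value_true_csat:
  assumes t: "t \<le> n"
  shows "(True, H (TSat (TC c)) (TN t)) \<in> M \<Longrightarrow> csat S (state_at t) c"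
proof (induction c rule: wf_induct[OF subco_converse_wf])
  case (1 c)
  have not: "(False, H (TSat (TC c)) (TN t)) \<notin> M"
    using consistent 1(2) by blast
  have base: "(True, Step (TN t)) \<in> M" "(True, Concern (TC c)) \<in> M"
    using step_mem[OF t] concern_mem by auto
  have "NRule (Some (False, H (TSat (TC c)) (TN t))) [(True, Concern (TC c)),
      (True, AddConcern (TC c) (TG (te_root E c))), (True, Step (TN t))]
      [(True, H (TG (te_root E c)) (TN t))] \<in> P"
    by (simp add: program_defs)
  from head_absent_blocked[OF this _ not] have "(True, H (TG (te_root E c)) (TN t)) \<in> M"
    using base addconcern_mem by simp
  then have "lam_sat S (state_at t) c"
    using formula_value_true_holds[OF t] root_holds_iff by blast
  moreover have "csat S (state_at t) y" if y: "(c, y) \<in> cps_subco S" for y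
  proof -
    have "NRule (Some (False, H (TSat (TC c)) (TN t))) [(True, SubCo (TC c) (TC y)),
        (True, Concern (TC c)), (True, Concern (TC y)), (True, Step (TN t))]
        [(True, H (TSat (TC y)) (TN t))] \<in> P"
      by (simp add: program_defs)
    from head_absent_blocked[OF this _ not] have "(True, H (TSat (TC y)) (TN t)) \<in> M"
      using base concern_mem subco_mem[OF y] by simp
    then show ?thesis
      using 1(1)[rule_format, of y] y by simp
  qed
  ultimately show ?case
    by (blast intro: csat.intros)
qed

lemma csat_at_horizon: "c \<in> \<Sigma> \<Longrightarrow> csat S (state_at n) c"
proof -
  assume "c \<in> \<Sigma>"
  then have "NRule None [] [(True, H (TSat (TC c)) (TN n))] \<in> P"
    by (simp add: program_defs)
  from constraint_blocks[OF this] have "(True, H (TSat (TC c)) (TN n)) \<in> M"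
    by simp
  then show ?thesis
    by (rule sat_value_true_csat[rotated]) simp
qed

end

section \<open>From mitigation strategies to answer sets\<close>

locale plan_trajectory = cps_program S E I n \<Sigma>
  for S :: "('co, 'a, 'f, 'c, 'u) cps" and E :: "('f, 'c, 'g) tree_enc"
    and I :: "'f set" and n :: nat and \<Sigma> :: "'c set" +
  fixes \<alpha> :: "'a list" and st :: "nat \<Rightarrow> 'f set"
  assumes length_plan: "length \<alpha> = n" and run_init: "st 0 = I" and run: "run S \<alpha> st"
    and goals: "\<forall>c\<in>\<Sigma>. csat S (st n) c"
begin

text \<open>The inertia rules with body step(n) also fix the fluents at time n + 1, so the
  intended answer set repeats the final state there.\<close>
definition traj :: "nat \<Rightarrow> 'f set" where
  "traj t = st (min t n)"

lemma traj_0: "traj 0 = I"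
  by (simp add: traj_def run_init)

lemma traj_Suc_n: "traj (Suc n) = traj n"
  by (simp add: traj_def)

lemma traj_trans: "t < n \<Longrightarrow> traj (Suc t) \<in> trans S (\<alpha> ! t) (traj t)"
  using run length_plan by (simp add: traj_def run_def)

lemma traj_is_state: "is_state S (traj t)"
proof (cases "min t n")
  case 0
  then show ?thesis
    using init_state run_init by (simp add: traj_def)
next
  case (Suc k)
  then have "st (Suc k) \<in> trans S (\<alpha> ! k) (st k)"
    using run length_plan unfolding run_def by simp
  then show ?thesis
    using Suc trans_is_state by (simp add: traj_def)
qed

lemma traj_executable: "t < n \<Longrightarrow> executable S (\<alpha> ! t) (traj t)"
  using traj_trans unfolding trans_iff by blast

lemma traj_flits:
  "t < n \<Longrightarrow> flits (traj (Suc t)) = cn S (direct_eff S (\<alpha> ! t) (traj t) \<union> (flits (traj t) \<inter> flits (traj (Suc t))))"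
  using traj_trans unfolding trans_iff by blast

lemma traj_goals: "c \<in> \<Sigma> \<Longrightarrow> csat S (traj n) c"
  using goals by (simp add: traj_def)

definition model :: "('a, 'f, 'c, 'g) lit set" where
  "model = {(True, Step (TN t)) | t. t \<le> n}
   \<union> {(True, Action (TA a)) | a. True}
   \<union> {(True, Fluent (TF f)) | f. True}
   \<union> {(True, Concern (TC c)) | c. True}
   \<union> {(True, Prop T) | T. prop_trm S T}
   \<union> {(True, SubCo (TC x) (TC y)) | x y. (x, y) \<in> cps_subco S}
   \<union> {(True, AddBy (TC c) (TF p)) | c p. (c, p) \<in> cps_addby S}
   \<union> {(True, Formula T) | T. formula_trm E T}
   \<union> {(True, Conjunction (TG g)) | g. g \<in> te_conj E}
   \<union> {(True, Disjunction (TG g)) | g. g \<in> te_disj E}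
   \<union> {(True, Member (memb_trm m) (TG g)) | m g. (m, g) \<in> te_mem E}
   \<union> {(True, AddConcern (TC c) (TG (te_root E c))) | c. True}
   \<union> {(True, Exec (TA a) (TN t)) | a t. t \<le> n \<and> executable S a (traj t)}
   \<union> {(True, Occurs (TA (\<alpha> ! t)) (TN t)) | t. t < n}
   \<union> {(f \<in> traj t, H (TF f) (TN t)) | f t. t \<le> Suc n}
   \<union> {(tree_holds E (traj t) g, H (TG g) (TN t)) | g t. t \<le> n \<and> g \<in> te_fids E}
   \<union> {(True, H (TNeg (TG g)) (TN t)) | g t. t \<le> n \<and> g \<in> te_fids E \<and> \<not> tree_holds E (traj t) g}
   \<union> {(True, H (TNeg (TF p)) (TN t)) | p t. t \<le> n \<and> p \<in> cps_props S \<and> p \<notin> traj t}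
   \<union> {(csat S (traj t) c, H (TSat (TC c)) (TN t)) | c t. t \<le> n}"

lemma model_consistent: "consistent_lits model"
  unfolding consistent_lits_def model_def by auto

lemma model_Step: "(b, Step T) \<in> model \<longleftrightarrow> b \<and> (\<exists>t. T = TN t \<and> t \<le> n)"
  unfolding model_def by auto

lemma model_Occurs: "(b, Occurs A T) \<in> model \<longleftrightarrow> b \<and> (\<exists>t. A = TA (\<alpha> ! t) \<and> T = TN t \<and> t < n)"
  unfolding model_def by auto

lemma model_Exec:
  "(b, Exec A T) \<in> model \<longleftrightarrow> b \<and> (\<exists>a t. A = TA a \<and> T = TN t \<and> t \<le> n \<and> executable S a (traj t))"
  unfolding model_def by auto

lemma model_Formula: "(b, Formula T) \<in> model \<longleftrightarrow> b \<and> formula_trm E T"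
  unfolding model_def by auto

lemma model_Prop: "(b, Prop T) \<in> model \<longleftrightarrow> b \<and> prop_trm S T"
  unfolding model_def by auto

lemma model_Conjunction: "(b, Conjunction T) \<in> model \<longleftrightarrow> b \<and> (\<exists>g. T = TG g \<and> g \<in> te_conj E)"
  unfolding model_def by auto

lemma model_Disjunction: "(b, Disjunction T) \<in> model \<longleftrightarrow> b \<and> (\<exists>g. T = TG g \<and> g \<in> te_disj E)"
  unfolding model_def by auto

lemma model_Member:
  "(b, Member G F) \<in> model \<longleftrightarrow> b \<and> (\<exists>m g. G = memb_trm m \<and> F = TG g \<and> (m, g) \<in> te_mem E)"
  unfolding model_def by auto

lemma model_Concern: "(b, Concern X) \<in> model \<longleftrightarrow> b \<and> (\<exists>c. X = TC c)"
  unfolding model_def by auto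

lemma model_SubCo:
  "(b, SubCo X Y) \<in> model \<longleftrightarrow> b \<and> (\<exists>x y. X = TC x \<and> Y = TC y \<and> (x, y) \<in> cps_subco S)"
  unfolding model_def by auto

lemma model_AddConcern:
  "(b, AddConcern C F) \<in> model \<longleftrightarrow> b \<and> (\<exists>c. C = TC c \<and> F = TG (te_root E c))"
  unfolding model_def by auto

lemma model_H: "(b, H F T) \<in> model \<longleftrightarrow>
    (\<exists>f t. F = TF f \<and> T = TN t \<and> t \<le> Suc n \<and> (f \<in> traj t) = b)
  \<or> (\<exists>g t. F = TG g \<and> T = TN t \<and> t \<le> n \<and> g \<in> te_fids E \<and> tree_holds E (traj t) g = b)
  \<or> (b \<and> (\<exists>g t. F = TNeg (TG g) \<and> T = TN t \<and> t \<le> n \<and> g \<in> te_fids E \<and> \<not> tree_holds E (traj t) g))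
  \<or> (b \<and> (\<exists>p t. F = TNeg (TF p) \<and> T = TN t \<and> t \<le> n \<and> p \<in> cps_props S \<and> p \<notin> traj t))
  \<or> (\<exists>c t. F = TSat (TC c) \<and> T = TN t \<and> t \<le> n \<and> csat S (traj t) c = b)"
  unfolding model_def by auto

lemma model_hstar: "hstar q T \<in> model \<longleftrightarrow> (\<exists>t. T = TN t \<and> t \<le> Suc n \<and> q \<in> flits (traj t))"
  by (cases q) (auto simp: hstar_def model_H)

lemma model_member_value:
  assumes "(m, g) \<in> te_mem E" and "t \<le> n"
  shows "(True, H (memb_trm m) (TN t)) \<in> model \<longleftrightarrow> member_holds E (traj t) m"
  using assms member_negprop member_formula
  by (cases m) (auto simp: model_H memb_trm_def member_holds_def)

lemma model_sat_exec_rule: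
  assumes "(a, ps) \<in> cps_exec S"
  shows "rule_sat model (NRule (Some (True, Exec (TA a) T)) ((True, Step T) # map (\<lambda>q. hstar q T) ps) [])"
proof (clarsimp simp: model_Step)
  fix t assume t: "t \<le> n" and "(\<lambda>q. hstar q (TN t)) ` set ps \<subseteq> model"
  then have "holds_all (traj t) ps"
    unfolding holds_all_def by (auto simp: model_hstar)
  with assms have "executable S a (traj t)"
    unfolding executable_def by blast
  with t show "(True, Exec (TA a) (TN t)) \<in> model"
    by (simp add: model_Exec)
qed

lemma model_sat_dyn_rule:
  assumes "(a, l, ps) \<in> cps_dyn S"
  shows "rule_sat model (NRule (Some (hstar l (TN (Suc t))))
    ((True, Step (TN t)) # (True, Occurs (TA a) (TN t)) # map (\<lambda>q. hstar q (TN t)) ps) [])"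
proof (clarsimp simp: model_Step model_Occurs)
  assume t: "t < n" and a: "a = \<alpha> ! t" and "(\<lambda>q. hstar q (TN t)) ` set ps \<subseteq> model"
  then have "holds_all (traj t) ps"
    unfolding holds_all_def by (auto simp: model_hstar)
  with assms a have "l \<in> direct_eff S (\<alpha> ! t) (traj t)"
    unfolding direct_eff_def by blast
  then have "l \<in> flits (traj (Suc t))"
    using traj_flits[OF t] cn_incl by blast
  with t show "hstar l (TN (Suc t)) \<in> model"
    by (simp add: model_hstar)
qed

lemma model_sat_stat_rule:
  assumes "(l, ps) \<in> cps_stat S"
  shows "rule_sat model (NRule (Some (hstar l T)) ((True, Step T) # map (\<lambda>q. hstar q T) ps) [])"
proof (clarsimp simp: model_Step)
  fix t assume t: "t \<le> n" and "(\<lambda>q. hstar q (TN t)) ` set ps \<subseteq> model"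
  then have "holds_all (traj t) ps"
    unfolding holds_all_def by (auto simp: model_hstar)
  with assms have "l \<in> flits (traj t)"
    using traj_is_state unfolding is_state_def by blast
  with t show "hstar l (TN t) \<in> model"
    by (simp add: model_hstar)
qed

lemma model_sat_inertia_rules:
  "rule_sat model (NRule (Some (True, H (TF f) (TN (Suc t))))
     [(True, Step (TN t)), (True, H (TF f) (TN t))] [(False, H (TF f) (TN (Suc t)))])"
  "rule_sat model (NRule (Some (False, H (TF f) (TN (Suc t))))
     [(True, Step (TN t)), (False, H (TF f) (TN t))] [(True, H (TF f) (TN (Suc t)))])"
  by (auto simp: model_Step model_H)

lemma model_sat_neg_closure_rules:
  "rule_sat model (NRule (Some (True, Formula (TNeg G))) [(True, Formula G)] [])"
  "rule_sat model (NRule (Some (True, Prop (TNeg G))) [(True, Prop G)] [])"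
  by (simp_all add: model_Formula model_Prop)

lemma model_sat_neg_value_rules:
  "rule_sat model (NRule (Some (True, H (TNeg F) T)) [(True, Step T), (True, Formula F), (False, H F T)] [])"
  "rule_sat model (NRule (Some (True, H (TNeg F) T)) [(True, Step T), (True, Prop F), (False, H F T)] [])"
  by (auto simp: model_Step model_Formula model_Prop model_H)

lemma model_sat_disj_true_rule:
  "rule_sat model (NRule (Some (True, H F T))
     [(True, Step T), (True, Formula F), (True, Disjunction F), (True, Member G F), (True, H G T)] [])"
proof (clarsimp simp: model_Step model_Disjunction model_Member)
  fix t g m assume t: "t \<le> n" and gd: "g \<in> te_disj E" and m: "(m, g) \<in> te_mem E"
    and "(True, H (memb_trm m) (TN t)) \<in> model"
  then have "member_holds E (traj t) m"
    using model_member_value by blast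
  with m gd have "tree_holds E (traj t) g"
    using tree_holds_disj_iff[OF gd conj_disj_disjoint] by blast
  with t gd conj_disj_fids show "(True, H (TG g) (TN t)) \<in> model"
    by (auto simp: model_H)
qed

lemma model_sat_disj_false_rule:
  "rule_sat model (NRule (Some (False, H F T))
     [(True, Step T), (True, Formula F), (True, Disjunction F)] [(True, H F T)])"
  using conj_disj_fids by (auto simp: model_Step model_Formula model_Disjunction model_H)

lemma model_sat_conj_true_rule:
  "rule_sat model (NRule (Some (True, H F T))
     [(True, Step T), (True, Formula F), (True, Conjunction F)] [(False, H F T)])"
  using conj_disj_fids by (auto simp: model_Step model_Formula model_Conjunction model_H)

lemma model_conj_member_false:
  assumes "set [(True, Step T), (True, Conjunction F), (True, Member G F)] \<subseteq> model"
    and "(True, H G T) \<notin> model"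
  shows "(False, H F T) \<in> model"
proof -
  obtain t g m where t: "T = TN t" "t \<le> n" and g: "F = TG g" "g \<in> te_conj E"
    and m: "G = memb_trm m" "(m, g) \<in> te_mem E"
    using assms(1) by (auto simp: model_Step model_Conjunction model_Member)
  then have "\<not> member_holds E (traj t) m"
    using assms(2) model_member_value by blast
  with m(2) have "\<not> tree_holds E (traj t) g"
    using tree_holds_conj_iff[OF g(2) conj_disj_disjoint] by blast
  with t g conj_disj_fids show ?thesis
    by (auto simp: model_H)
qed

lemma model_sat_conj_false_rules:
  "rule_sat model (NRule (Some (False, H F T)) [(True, Step T), (True, Formula G), (True, Formula F),
     (True, Conjunction F), (True, Member G F)] [(True, H G T)])"
  "rule_sat model (NRule (Some (False, H F T)) [(True, Step T), (True, Prop G), (True, Formula F),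
     (True, Conjunction F), (True, Member G F)] [(True, H G T)])"
  using model_conj_member_false by auto

lemma model_sat_root_rule:
  "rule_sat model (NRule (Some (False, H (TSat C) T))
     [(True, Concern C), (True, AddConcern C F), (True, Step T)] [(True, H F T)])"
proof (clarsimp simp: model_Step model_AddConcern)
  fix c t assume t: "t \<le> n" and "(True, H (TG (te_root E c)) (TN t)) \<notin> model"
  then have "\<not> lam_sat S (traj t) c"
    using root_fid root_holds_iff by (auto simp: model_H)
  with t show "(False, H (TSat (TC c)) (TN t)) \<in> model"
    by (auto simp: model_H dest: csat_lam_sat)
qed

lemma model_sat_subco_rules:
  "rule_sat model (NRule (Some (False, H (TSat X) T))
     [(True, SubCo X Y), (True, Concern X), (True, Concern Y), (True, Step T)] [(True, H (TSat Y) T)])"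
  "rule_sat model (NRule (Some (False, H (TSat X) T))
     [(True, SubCo X Y), (False, H (TSat Y) T), (True, Concern X), (True, Concern Y), (True, Step T)] [])"
  by (auto simp: model_Step model_SubCo model_H dest: csat_subconcern)

lemma model_sat_concern_rule:
  "rule_sat model (NRule (Some (True, H (TSat C) T)) [(True, Concern C), (True, Step T)]
     [(False, H (TSat C) T)])"
  by (auto simp: model_Step model_Concern model_H)

lemma model_sat_choice_rule:
  assumes "t < n"
  shows "rule_sat model (CRule 1 1 {(True, Occurs (TA a) (TN t)) | a. True} [(True, Step (TN t))] [])"
proof -
  have "{(True, Occurs (TA a) (TN t)) | a. True} \<inter> model = {(True, Occurs (TA (\<alpha> ! t)) (TN t))}"
    using assms by (auto simp: model_Occurs)
  then show ?thesis by simp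
qed

lemma model_sat_constraints:
  "rule_sat model (NRule None [(True, Occurs A T)] [(True, Exec A T)])"
  "c \<in> \<Sigma> \<Longrightarrow> rule_sat model (NRule None [] [(True, H (TSat (TC c)) (TN n))])"
  using traj_executable traj_goals by (auto simp: model_Occurs model_Exec model_H)

lemma model_sat: "\<forall>r\<in>P. rule_sat model r"
  unfolding pi_delta_def pi_plan_def pi_sys_def pi_init_def pi_sat_def ball_Un
  by (intro conjI; (blast intro: model_sat_exec_rule model_sat_dyn_rule model_sat_stat_rule
      model_sat_inertia_rules model_sat_neg_closure_rules model_sat_neg_value_rules
      model_sat_disj_true_rule model_sat_disj_false_rule model_sat_conj_true_rule
      model_sat_conj_false_rules model_sat_root_rule model_sat_subco_rules model_sat_concern_rule
      model_sat_choice_rule model_sat_constraints)?)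
    (auto simp: model_def traj_0)

abbreviation derived :: "('a, 'f, 'c, 'g) lit \<Rightarrow> bool" where
  "derived \<equiv> derivable (reduct P model)"

lemma derived_rule:
  "NRule (Some l) b nn \<in> P \<Longrightarrow> set nn \<inter> model = {} \<Longrightarrow> \<forall>x\<in>set b. derived x \<Longrightarrow> derived l"
  by (rule derivable_NRule)

lemma derived_fact: "fact l \<in> P \<Longrightarrow> derived l"
  using derived_rule[of l "[]" "[]"] by simp

lemma derived_facts:
  shows derived_step: "t \<le> n \<Longrightarrow> derived (True, Step (TN t))"
    and derived_action: "derived (True, Action (TA a))"
    and derived_fluent: "derived (True, Fluent (TF f))"
    and derived_concern: "derived (True, Concern (TC c))"
    and derived_subco: "(x, y) \<in> cps_subco S \<Longrightarrow> derived (True, SubCo (TC x) (TC y))"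
    and derived_addby: "(c, p) \<in> cps_addby S \<Longrightarrow> derived (True, AddBy (TC c) (TF p))"
    and derived_addconcern: "derived (True, AddConcern (TC c) (TG (te_root E c)))"
    and derived_conjunction: "g \<in> te_conj E \<Longrightarrow> derived (True, Conjunction (TG g))"
    and derived_disjunction: "g \<in> te_disj E \<Longrightarrow> derived (True, Disjunction (TG g))"
    and derived_member: "(m, g) \<in> te_mem E \<Longrightarrow> derived (True, Member (memb_trm m) (TG g))"
  by (rule derived_fact; simp add: program_defs; blast)+

lemma derived_init: "derived (f \<in> I, H (TF f) (TN 0))"
  by (cases "f \<in> I"; rule derived_fact) (simp_all add: program_defs)

lemma derived_formula: "formula_trm E T \<Longrightarrow> derived (True, Formula T)"
proof (induction T)
  case (TG g)
  then show ?case by (intro derived_fact) (simp add: program_defs)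
next
  case (TNeg T)
  then show ?case by (intro derived_rule[of _ "[(True, Formula T)]" "[]"]) (simp_all add: program_defs)
qed simp_all

lemma derived_prop: "prop_trm S T \<Longrightarrow> derived (True, Prop T)"
proof (induction T)
  case (TF p)
  then show ?case by (intro derived_fact) (simp add: program_defs)
next
  case (TNeg T)
  then show ?case by (intro derived_rule[of _ "[(True, Prop T)]" "[]"]) (simp_all add: program_defs)
qed simp_all

lemma derived_occurs: 
  assumes "t < n"
  shows "derived (True, Occurs (TA (\<alpha> ! t)) (TN t))"
proof (rule derivable_CRule)
  show "CRule 1 1 {(True, Occurs (TA a) (TN t)) | a. True} [(True, Step (TN t))] [] \<in> P"
    using assms unfolding pi_plan_def by blast
  show "(True, Occurs (TA (\<alpha> ! t)) (TN t)) \<in> {(True, Occurs (TA a) (TN t)) | a. True} \<inter> model"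
    using assms by (auto simp: model_Occurs)
qed (use assms derived_step in auto)

lemma derived_inertia:
  assumes t: "t \<le> n" and prev: "derived (hstar q (TN t))" and q: "q \<in> flits (traj (Suc t))"
  shows "derived (hstar q (TN (Suc t)))"
proof (cases q)
  case (Pair f b)
  have "NRule (Some (b, H (TF f) (TN (Suc t)))) [(True, Step (TN t)), (b, H (TF f) (TN t))]
      [(\<not> b, H (TF f) (TN (Suc t)))] \<in> P"
    by (cases b) (simp_all add: program_defs)
  moreover have "set [(\<not> b, H (TF f) (TN (Suc t)))] \<inter> model = {}"
    using q Pair t by (auto simp: model_H)
  ultimately have "derived (b, H (TF f) (TN (Suc t)))"
    by (rule derived_rule) (use prev Pair derived_step[OF t] in \<open>simp add: hstar_def\<close>)
  with Pair show ?thesis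
    by (simp add: hstar_def)
qed

lemma derived_static:
  assumes t: "t \<le> n" and "(l, ps) \<in> cps_stat S" and "\<forall>q\<in>set ps. derived (hstar q (TN t))"
  shows "derived (hstar l (TN t))"
proof (rule derived_rule)
  show "NRule (Some (hstar l (TN t))) ((True, Step (TN t)) # map (\<lambda>q. hstar q (TN t)) ps) [] \<in> P"
    using assms(2) by (rule stat_rule_mem)
qed (use assms derived_step[OF t] in auto)

lemma derived_direct_effect:
  assumes t: "t < n" and prev: "\<forall>q\<in>flits (traj t). derived (hstar q (TN t))"
    and l: "l \<in> direct_eff S (\<alpha> ! t) (traj t)"
  shows "derived (hstar l (TN (Suc t)))"
proof -
  obtain ps where ps: "(\<alpha> ! t, l, ps) \<in> cps_dyn S" "holds_all (traj t) ps"
    using l unfolding direct_eff_def by blast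
  show ?thesis
  proof (rule derived_rule)
    show "NRule (Some (hstar l (TN (Suc t))))
        ((True, Step (TN t)) # (True, Occurs (TA (\<alpha> ! t)) (TN t)) # map (\<lambda>q. hstar q (TN t)) ps) [] \<in> P"
      using ps(1) by (rule dyn_rule_mem)
  qed (use t prev ps(2) derived_step derived_occurs in \<open>auto simp: holds_all_def\<close>)
qed

lemma derived_fluent_literal: "t \<le> Suc n \<Longrightarrow> q \<in> flits (traj t) \<Longrightarrow> derived (hstar q (TN t))"
proof (induction t arbitrary: q)
  case 0
  then show ?case
    using derived_init traj_0 by (cases q) (auto simp: hstar_def)
next
  case (Suc t)
  then have t: "t \<le> n" by simp
  have prev: "\<forall>q\<in>flits (traj t). derived (hstar q (TN t))"
    using Suc.IH t by simp
  show ?case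
  proof (cases "t < n")
    case False
    with t Suc.prems show ?thesis
      using derived_inertia[OF t] prev traj_Suc_n by simp
  next
    case True
    have "cn S (direct_eff S (\<alpha> ! t) (traj t) \<union> (flits (traj t) \<inter> flits (traj (Suc t))))
        \<subseteq> {q. derived (hstar q (TN (Suc t)))}"
    proof (rule cn_least)
      show "direct_eff S (\<alpha> ! t) (traj t) \<union> (flits (traj t) \<inter> flits (traj (Suc t)))
          \<subseteq> {q. derived (hstar q (TN (Suc t)))}"
        using derived_direct_effect[OF True prev] derived_inertia[OF t] prev by blast
      show "\<forall>(l, ps)\<in>cps_stat S. set ps \<subseteq> {q. derived (hstar q (TN (Suc t)))}
          \<longrightarrow> l \<in> {q. derived (hstar q (TN (Suc t)))}"
        using derived_static[of "Suc t"] True by auto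
    qed
    with Suc.prems show ?thesis
      using traj_flits[OF True] by blast
  qed
qed

lemma derived_fluent_value: "t \<le> Suc n \<Longrightarrow> derived (f \<in> traj t, H (TF f) (TN t))"
  using derived_fluent_literal[of t "(f, f \<in> traj t)"] by (simp add: hstar_def)

lemma derived_exec:
  assumes t: "t \<le> n" and "executable S a (traj t)"
  shows "derived (True, Exec (TA a) (TN t))"
proof -
  obtain ps where ps: "(a, ps) \<in> cps_exec S" "holds_all (traj t) ps"
    using assms(2) unfolding executable_def by blast
  show ?thesis
  proof (rule derived_rule)
    show "NRule (Some (True, Exec (TA a) (TN t))) ((True, Step (TN t)) # map (\<lambda>q. hstar q (TN t)) ps) []
        \<in> P"
      using ps(1) by (rule exec_rule_mem)
  qed (use t ps(2) derived_step derived_fluent_literal in \<open>auto simp: holds_all_def\<close>)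
qed

lemma derived_neg_prop_value:
  assumes t: "t \<le> n" and "p \<in> cps_props S" and "p \<notin> traj t"
  shows "derived (True, H (TNeg (TF p)) (TN t))"
proof (rule derived_rule)
  show "NRule (Some (True, H (TNeg (TF p)) (TN t)))
      [(True, Step (TN t)), (True, Prop (TF p)), (False, H (TF p) (TN t))] [] \<in> P"
    by (simp add: program_defs)
qed (use assms derived_step derived_prop[of "TF p"] derived_fluent_value[of t p] in auto)

lemma derived_conj_true:
  assumes t: "t \<le> n" and gc: "g \<in> te_conj E" and "tree_holds E (traj t) g"
  shows "derived (True, H (TG g) (TN t))"
proof (rule derived_rule)
  show "NRule (Some (True, H (TG g) (TN t)))
      [(True, Step (TN t)), (True, Formula (TG g)), (True, Conjunction (TG g))]
      [(False, H (TG g) (TN t))] \<in> P"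
    by (simp add: program_defs)
qed (use assms conj_disj_fids[symmetric] derived_step derived_formula derived_conjunction in \<open>auto simp: model_H\<close>)

lemma derived_disj_false:
  assumes t: "t \<le> n" and gd: "g \<in> te_disj E" and "\<not> tree_holds E (traj t) g"
  shows "derived (False, H (TG g) (TN t))"
proof (rule derived_rule)
  show "NRule (Some (False, H (TG g) (TN t)))
      [(True, Step (TN t)), (True, Formula (TG g)), (True, Disjunction (TG g))]
      [(True, H (TG g) (TN t))] \<in> P"
    by (simp add: program_defs)
qed (use assms conj_disj_fids[symmetric] derived_step derived_formula derived_disjunction in \<open>auto simp: model_H\<close>)

lemma derived_disj_true:
  assumes t: "t \<le> n" and gd: "g \<in> te_disj E" and m: "(m, g) \<in> te_mem E"
    and "derived (True, H (memb_trm m) (TN t))"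
  shows "derived (True, H (TG g) (TN t))"
proof (rule derived_rule)
  show "NRule (Some (True, H (TG g) (TN t)))
      [(True, Step (TN t)), (True, Formula (TG g)), (True, Disjunction (TG g)),
       (True, Member (memb_trm m) (TG g)), (True, H (memb_trm m) (TN t))] [] \<in> P"
    by (simp add: program_defs)
qed (use assms conj_disj_fids[symmetric] derived_step derived_formula derived_disjunction derived_member in auto)

lemma derived_conj_false:
  assumes t: "t \<le> n" and gc: "g \<in> te_conj E" and m: "(m, g) \<in> te_mem E"
    and "\<not> member_holds E (traj t) m"
  shows "derived (False, H (TG g) (TN t))"
proof -
  have base: "derived (True, Step (TN t))" "derived (True, Formula (TG g))"
    "derived (True, Conjunction (TG g))" "derived (True, Member (memb_trm m) (TG g))"
    using derived_step[OF t] derived_formula gc conj_disj_fids[symmetric] derived_conjunction[OF gc]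
      derived_member[OF m]
    by auto
  have absent: "(True, H (memb_trm m) (TN t)) \<notin> model"
    using model_member_value[OF m t] assms(4) by simp
  show ?thesis
  proof (cases m)
    case (MProp p)
    have "NRule (Some (False, H (TG g) (TN t))) [(True, Step (TN t)), (True, Prop (TF p)),
        (True, Formula (TG g)), (True, Conjunction (TG g)), (True, Member (TF p) (TG g))]
        [(True, H (TF p) (TN t))] \<in> P"
      by (simp add: program_defs)
    then show ?thesis
      by (rule derived_rule)
        (use base absent MProp derived_prop member_prop m in \<open>auto simp: memb_trm_def\<close>)
  next
    case (MNegProp p)
    have "NRule (Some (False, H (TG g) (TN t))) [(True, Step (TN t)), (True, Prop (TNeg (TF p))),
        (True, Formula (TG g)), (True, Conjunction (TG g)), (True, Member (TNeg (TF p)) (TG g))]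
        [(True, H (TNeg (TF p)) (TN t))] \<in> P"
      by (simp add: program_defs)
    then show ?thesis
      by (rule derived_rule)
        (use base absent MNegProp derived_prop member_negprop m in \<open>auto simp: memb_trm_def\<close>)
  next
    case (MFrm g')
    have "NRule (Some (False, H (TG g) (TN t))) [(True, Step (TN t)), (True, Formula (TG g')),
        (True, Formula (TG g)), (True, Conjunction (TG g)), (True, Member (TG g') (TG g))]
        [(True, H (TG g') (TN t))] \<in> P"
      by (simp add: program_defs)
    then show ?thesis
      by (rule derived_rule)
        (use base absent MFrm derived_formula member_formula m in \<open>auto simp: memb_trm_def\<close>)
  qed
qed

lemma derived_member_true:
  assumes t: "t \<le> n" and m: "(m, g) \<in> te_mem E" and "member_holds E (traj t) m"
    and "\<And>g'. m = MFrm g' \<Longrightarrow> derived (True, H (TG g') (TN t))"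
  shows "derived (True, H (memb_trm m) (TN t))"
proof (cases m)
  case (MProp p)
  with assms show ?thesis
    using derived_fluent_value[of t p] by (simp add: memb_trm_def member_holds_def)
next
  case (MNegProp p)
  with assms show ?thesis
    using derived_neg_prop_value[OF t] member_negprop by (simp add: memb_trm_def member_holds_def)
next
  case (MFrm g')
  with assms show ?thesis
    by (simp add: memb_trm_def)
qed

lemma derived_formula_value:
  assumes t: "t \<le> n"
  shows "g \<in> te_fids E \<Longrightarrow> derived (tree_holds E (traj t) g, H (TG g) (TN t))"
proof (induction g rule: wf_induct[OF subformula_wf])
  case (1 g)
  consider (conj) "g \<in> te_conj E" | (disj) "g \<in> te_disj E"
    using 1(2) conj_disj_fids by blast
  then show ?case
  proof cases
    case conj
    show ?thesis
    proof (cases "tree_holds E (traj t) g")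
      case True
      then show ?thesis
        using derived_conj_true[OF t conj] by simp
    next
      case False
      then obtain m where "(m, g) \<in> te_mem E" and "\<not> member_holds E (traj t) m"
        using tree_holds_conj_iff[OF conj conj_disj_disjoint] by blast
      with False show ?thesis
        using derived_conj_false[OF t conj] by simp
    qed
  next
    case disj
    show ?thesis
    proof (cases "tree_holds E (traj t) g")
      case True
      then obtain m where m: "(m, g) \<in> te_mem E" and holds: "member_holds E (traj t) m"
        using tree_holds_disj_iff[OF disj conj_disj_disjoint] by blast
      have "derived (True, H (memb_trm m) (TN t))"
      proof (rule derived_member_true[OF t m holds])
        fix g' assume "m = MFrm g'"
        with m holds show "derived (True, H (TG g') (TN t))"
          using 1(1) member_formula by (auto simp: member_holds_def)
      qed
      with True show ?thesis
        using derived_disj_true[OF t disj m] by simp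
    next
      case False
      then show ?thesis
        using derived_disj_false[OF t disj] by simp
    qed
  qed
qed

lemma derived_neg_formula_value:
  assumes t: "t \<le> n" and g: "g \<in> te_fids E" and "\<not> tree_holds E (traj t) g"
  shows "derived (True, H (TNeg (TG g)) (TN t))"
proof (rule derived_rule)
  show "NRule (Some (True, H (TNeg (TG g)) (TN t)))
      [(True, Step (TN t)), (True, Formula (TG g)), (False, H (TG g) (TN t))] [] \<in> P"
    by (simp add: program_defs)
qed (use assms derived_step derived_formula derived_formula_value[OF t g] in auto)

lemma derived_sat_value:
  assumes t: "t \<le> n"
  shows "derived (csat S (traj t) c, H (TSat (TC c)) (TN t))"
proof (cases "csat S (traj t) c")
  case True
  have "NRule (Some (True, H (TSat (TC c)) (TN t))) [(True, Concern (TC c)), (True, Step (TN t))]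
      [(False, H (TSat (TC c)) (TN t))] \<in> P"
    by (simp add: program_defs)
  then have "derived (True, H (TSat (TC c)) (TN t))"
    by (rule derived_rule) (use True t derived_step derived_concern in \<open>auto simp: model_H\<close>)
  with True show ?thesis by simp
next
  case False
  then consider "\<not> lam_sat S (traj t) c" | y where "(c, y) \<in> cps_subco S" "\<not> csat S (traj t) y"
    by (blast intro: csat.intros)
  then have "derived (False, H (TSat (TC c)) (TN t))"
  proof cases
    case 1
    have "NRule (Some (False, H (TSat (TC c)) (TN t))) [(True, Concern (TC c)),
        (True, AddConcern (TC c) (TG (te_root E c))), (True, Step (TN t))]
        [(True, H (TG (te_root E c)) (TN t))] \<in> P"
      by (simp add: program_defs)
    then show ?thesis
      by (rule derived_rule)
        (use 1 t root_fid root_holds_iff derived_step derived_concern derived_addconcern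
          in \<open>auto simp: model_H\<close>)
  next
    case (2 y)
    have "NRule (Some (False, H (TSat (TC c)) (TN t))) [(True, SubCo (TC c) (TC y)),
        (True, Concern (TC c)), (True, Concern (TC y)), (True, Step (TN t))]
        [(True, H (TSat (TC y)) (TN t))] \<in> P"
      by (simp add: program_defs)
    then show ?thesis
      by (rule derived_rule) (use 2 t derived_step derived_concern derived_subco in \<open>auto simp: model_H\<close>)
  qed
  with False show ?thesis by simp
qed

lemma model_derivable:
  assumes "l \<in> model"
  shows "derived l"
  using assms[unfolded model_def]
  by (elim UnE; clarsimp)
    (auto intro: derived_facts derived_prop derived_formula derived_exec derived_occurs
      derived_fluent_value derived_formula_value derived_neg_formula_value derived_neg_prop_value
      derived_sat_value)

lemma model_answer_set: "answer_set P model"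
  using model_consistent model_sat model_derivable by (blast intro: answer_setI)

lemma model_occurs: "i < n \<Longrightarrow> (True, Occurs (TA (\<alpha> ! i)) (TN i)) \<in> model"
  by (simp add: model_Occurs)

end

theorem mainTheorem3:
  fixes S :: "('co, 'a, 'f, 'c, 'u) cps"
    and E :: "('f, 'c, 'g) tree_enc"
    and I :: "'f set"
    and \<Sigma> :: "'c set"
    and n :: nat
    and \<alpha> :: "'a list"
  assumes "wf_cps S"
    and "enc_ok S E"
    and "is_state S I"
    and "length \<alpha> = n"
  shows "mitigation S \<Sigma> I \<alpha> \<longleftrightarrow>
    (\<exists>M :: ('a, 'f, 'c, 'g) lit set.
        answer_set (pi_delta S E I n \<union> pi_plan n \<Sigma>) M \<and>
        (\<forall>i < n. (True, Occurs (TA (\<alpha> ! i)) (TN i)) \<in> M))"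
proof -
  interpret cps_program S E I n \<Sigma>
    using assms(1-3) by unfold_locales
  have "mitigation S \<Sigma> I \<alpha> \<longleftrightarrow> (\<exists>st. st 0 = I \<and> run S \<alpha> st \<and> (\<forall>c\<in>\<Sigma>. csat S (st n) c))"
    using mitigation_iff_run[OF S_deterministic init_state] assms(4) by simp
  also have "\<dots> \<longleftrightarrow> (\<exists>M :: ('a, 'f, 'c, 'g) lit set. answer_set P M \<and>
      (\<forall>i < n. (True, Occurs (TA (\<alpha> ! i)) (TN i)) \<in> M))"
  proof
    assume "\<exists>st. st 0 = I \<and> run S \<alpha> st \<and> (\<forall>c\<in>\<Sigma>. csat S (st n) c)"
    then obtain st where "st 0 = I" "run S \<alpha> st" "\<forall>c\<in>\<Sigma>. csat S (st n) c"
      by blast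
    with assms interpret plan_trajectory S E I n \<Sigma> \<alpha> st
      by unfold_locales
    show "\<exists>M. answer_set P M \<and> (\<forall>i < n. (True, Occurs (TA (\<alpha> ! i)) (TN i)) \<in> M)"
      using model_answer_set model_occurs by blast
  next
    assume "\<exists>M :: ('a, 'f, 'c, 'g) lit set. answer_set P M \<and>
      (\<forall>i < n. (True, Occurs (TA (\<alpha> ! i)) (TN i)) \<in> M)"
    then obtain M :: "('a, 'f, 'c, 'g) lit set" where M: "answer_set P M"
      and occurs: "\<forall>i < n. (True, Occurs (TA (\<alpha> ! i)) (TN i)) \<in> M"
      by blast
    with assms interpret plan_answer_set S E I n \<Sigma> M
      by unfold_locales
    show "\<exists>st. st 0 = I \<and> run S \<alpha> st \<and> (\<forall>c\<in>\<Sigma>. csat S (st n) c)"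
      using state_at_0 run_state_at[OF assms(4) occurs] csat_at_horizon by blast
  qed
  finally show ?thesis .
qed

end
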